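(* If a share $I$ has exactly $m$ bridges and no arches, then in $\mathcal S$ we have $I=x^m+\sum_{k<m}a_k(c)x^k$ and $I=y^m+\sum_{k<m}b_k(c)y^k$ for some $a_k,b_k\in\mathbb C[c]$; i.e. $I$ is a monic polynomial of degree $m$ in $x$ (and in $y$).
   Context: Chord diagrams and $w_{\mathfrak{sl}_2}(D)=\sum_\varphi x_{\varphi(p_1)}\cdots x_{\varphi(p_{2n})}\in\mathbb C[c]$ ($x_1,x_2,x_3$ the basis $\tfrac12\begin{pmatrix}0&1\\1&0\end{pmatrix},\tfrac12\begin{pmatrix}0&-i\\ i&0\end{pmatrix},\tfrac12\begin{pmatrix}1&0\\0&-1\end{pmatrix}$ of $\mathfrak{sl}_2$, $c=\sum x_i^2$, endpoints read in order from a cut point, $\varphi$ over maps chords$\to\{1,2,3\}$). A share: two oriented intervals (strand 1, strand 2) with finitely many chords, up to orientation-preserving diffeomorphisms of each strand; arches have both endpoints on one strand, bridges one on each. Join $(I,H)$: chord diagram whose circle reads strand 1 of $I$, strand 1 of $H$, strand 2 of $I$, strand 2 of $H$. $\mathcal S$: quotient of the $\mathbb C$-span of shares by $I\sim I'$ iff $w_{\mathfrak{sl}_2}((I,H))=w_{\mathfrak{sl}_2}((I',H))$ for all shares $H$; a $\mathbb C[c]$-module with $c$ acting by adding an isolated arch. $x^k$ is the class of the share with $k$ bridges occurring in the same order on both strands; $y^k$ is the class of the share with $k$ bridges $b_1,\dots,b_k$ in order $b_1,\dots,b_k$ on strand 1 and $b_k,\dots,b_1$ on strand 2. *)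

theory Defs
  imports "HOL-Library.FuncSet" "HOL-Computational_Algebra.Polynomial"
begin

text \<open>
Shares: a share is given combinatorially by the two words read along strand 1 and
strand 2 (chords are labels; each label occurs exactly twice in total).
Representatives differing by relabelling represent the same share; all notions below
are invariant under relabelling.\<close>

type_synonym share = "nat list \<times> nat list"

definition is_share :: "share \<Rightarrow> bool" where
  "is_share s = (\<forall>l \<in> set (fst s @ snd s). count_list (fst s @ snd s) l = 2)"

definition arches :: "share \<Rightarrow> nat" where
  "arches s = card {l \<in> set (fst s) \<union> set (snd s).
      count_list (fst s) l = 2 \<or> count_list (snd s) l = 2}"

definition bridges :: "share \<Rightarrow> nat" where
  "bridges s = card {l \<in> set (fst s) \<union> set (snd s).
      count_list (fst s) l = 1 \<and> count_list (snd s) l = 1}"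

text \<open>x^k: k parallel bridges; y^k: k bridges in reversed order on strand 2.\<close>
definition xpow :: "nat \<Rightarrow> share" where
  "xpow k = ([0..<k], [0..<k])"

definition ypow :: "nat \<Rightarrow> share" where
  "ypow k = ([0..<k], rev [0..<k])"

text \<open>Join (I,H): circle reads strand 1 of I, strand 1 of H, strand 2 of I, strand 2 of H
(read linearly from the cut point before strand 1 of I); chords of I and H are kept
apart by tagging.\<close>
definition join :: "share \<Rightarrow> share \<Rightarrow> (nat + nat) list" where
  "join I H = map Inl (fst I) @ map Inr (fst H) @ map Inl (snd I) @ map Inr (snd H)"

definition add_arches :: "nat \<Rightarrow> share \<Rightarrow> share" where
  "add_arches j s = (let N = Suc (Max (insert 0 (set (fst s @ snd s))))
     in (fst s @ concat (map (\<lambda>t. [N + t, N + t]) [0..<j]), snd s))"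

text \<open>The irreducible (n+1)-dimensional representation V_n of sl_2, basis v_0..v_n with
h v_j = (n-2j) v_j, f v_j = v_(j+1), e v_j = j(n-j+1) v_(j-1). Matrices are functions
on indices 0..n (entry (i,j) = coefficient of v_i in the image of v_j).
For n = 1 the matrices of x_1,x_2,x_3 are exactly the given 2x2 matrices.\<close>
definition e_mat :: "nat \<Rightarrow> nat \<Rightarrow> nat \<Rightarrow> complex" where
  "e_mat n i j = (if i \<le> n \<and> j \<le> n \<and> j = Suc i then of_nat (j * (n + 1 - j)) else 0)"

definition f_mat :: "nat \<Rightarrow> nat \<Rightarrow> nat \<Rightarrow> complex" where
  "f_mat n i j = (if i \<le> n \<and> j \<le> n \<and> i = Suc j then 1 else 0)"

definition h_mat :: "nat \<Rightarrow> nat \<Rightarrow> nat \<Rightarrow> complex" where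
  "h_mat n i j = (if i \<le> n \<and> i = j then of_int (int n - 2 * int j) else 0)"

text \<open>rho n a = matrix of x_(a+1) in V_n, a in {0,1,2}.\<close>
definition rho :: "nat \<Rightarrow> nat \<Rightarrow> nat \<Rightarrow> nat \<Rightarrow> complex" where
  "rho n a i j = (if a = 0 then (e_mat n i j + f_mat n i j) / 2
                  else if a = 1 then \<i> * (f_mat n i j - e_mat n i j) / 2
                  else h_mat n i j / 2)"

fun matprod :: "nat \<Rightarrow> (nat \<Rightarrow> nat \<Rightarrow> complex) list \<Rightarrow> nat \<Rightarrow> nat \<Rightarrow> complex" where
  "matprod n [] i j = (if i = j then 1 else 0)"
| "matprod n (A # As) i j = (\<Sum>k\<le>n. A i k * matprod n As k j)"

text \<open>Image in V_n of w_sl2 of the chord diagram read (from the cut point) as the word ws: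
sum over maps phi: chords \<rightarrow> {1,2,3} of x_phi(p_1) ... x_phi(p_2n).\<close>
definition wrep :: "nat \<Rightarrow> 'a list \<Rightarrow> nat \<Rightarrow> nat \<Rightarrow> complex" where
  "wrep n ws i j = (\<Sum>\<phi> \<in> set ws \<rightarrow>\<^sub>E {0, 1, 2::nat}.
                       matprod n (map (\<lambda>l. rho n (\<phi> l)) ws) i j)"

text \<open>Formal C-linear combinations of shares, and equality in the module S:
L1 = L2 in S iff w_sl2((L1,H)) = w_sl2((L2,H)) for every share H.  Equality in
C[c] (a subalgebra of U(sl_2)) is tested in all irreducible representations V_n,
which together form a faithful family of representations of U(sl_2).\<close>
type_synonym comb = "(complex \<times> share) list"

definition comb_w :: "nat \<Rightarrow> comb \<Rightarrow> share \<Rightarrow> nat \<Rightarrow> nat \<Rightarrow> complex" where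
  "comb_w n L H i j = (\<Sum>(a, I) \<leftarrow> L. a * wrep n (join I H) i j)"

definition S_eq :: "comb \<Rightarrow> comb \<Rightarrow> bool" where
  "S_eq L1 L2 = (\<forall>H. is_share H \<longrightarrow>
      (\<forall>n i j. i \<le> n \<longrightarrow> j \<le> n \<longrightarrow> comb_w n L1 H i j = comb_w n L2 H i j))"

text \<open>C[c]-action: p(c) \<cdot> s = sum_j (coeff p j) c^j s, where c^j adds j isolated arches.\<close>
definition poly_act :: "complex poly \<Rightarrow> share \<Rightarrow> comb" where
  "poly_act p s = map (\<lambda>j. (coeff p j, add_arches j s)) [0..<Suc (degree p)]"

end

theory Submission
  imports Defs
begin

text \<open>
  A share is evaluated through the element
  \<open>G(I) = \<Sum>\<^sub>\<phi> x\<^sub>\<phi>(p\<^sub>1) \<cdots> x\<^sub>\<phi>(p\<^sub>k) \<otimes> x\<^sub>\<phi>(q\<^sub>1) \<cdots> x\<^sub>\<phi>(q\<^sub>l)\<close> of two commuting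
  copies of \<open>U(sl\<^sub>2)\<close> (one per strand): the \<open>sl\<^sub>2\<close> weight system of a join \<open>(I, H)\<close> depends on \<open>I\<close> only
  through \<open>G(I)\<close>, linearly, and an isolated arch multiplies \<open>G(I)\<close> by the Casimir \<open>C\<close>.

  Exchanging two adjacent chord endpoints changes \<open>G\<close> by a commutator, i.e. by a diagram with a
  trivalent vertex; sliding a leg of that vertex along the strand and contracting two Levi-Civita
  symbols shows that such a diagram is a combination of diagrams with fewer chords.  Hence, by
  induction on the number of chords, every endpoint can be moved freely at the cost of lower order
  terms.  Peeling off the first chord then gives a factor \<open>C\<close> for an arch and a factor
  \<open>\<Omega> = \<Sum>\<^sub>a x\<^sub>a \<otimes> x\<^sub>a\<close> for a bridge, so that \<open>G(I) = \<Omega>\<^sup>m + \<Sum>\<^bsub>k<m\<^esub> p\<^sub>k(C) \<Omega>\<^sup>k\<close>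
  for a share with \<open>m\<close> bridges and no arches.  The same holds for \<open>x\<^sup>k\<close> and \<open>y\<^sup>k\<close>, so the
  transition to these bases is unitriangular.
\<close>

lemma sum_PiE_insert:
  assumes "x \<notin> D"
  shows "(\<Sum>\<phi> \<in> insert x D \<rightarrow>\<^sub>E S. F \<phi>) = (\<Sum>\<phi> \<in> D \<rightarrow>\<^sub>E S. \<Sum>y\<in>S. F (\<phi>(x := y)))"
proof -
  have "(\<Sum>\<phi> \<in> insert x D \<rightarrow>\<^sub>E S. F \<phi>) = (\<Sum>\<phi> \<in> (\<lambda>(y, g). g(x := y)) ` (S \<times> (D \<rightarrow>\<^sub>E S)). F \<phi>)"
    by (simp add: PiE_insert_eq)
  also have "\<dots> = (\<Sum>(y, g) \<in> S \<times> (D \<rightarrow>\<^sub>E S). F (g(x := y)))"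
    by (subst sum.reindex[OF inj_combinator[OF assms]]) (simp add: case_prod_beta comp_def)
  also have "\<dots> = (\<Sum>\<phi> \<in> D \<rightarrow>\<^sub>E S. \<Sum>y\<in>S. F (\<phi>(x := y)))"
    by (simp add: sum.cartesian_product [symmetric] sum.swap [of _ S])
  finally show ?thesis .
qed

lemma sum_PiE_if_eq:
  assumes "finite D" "finite S" "b \<in> D" "f \<in> D" "b \<noteq> f"
  shows "(\<Sum>\<psi> \<in> D \<rightarrow>\<^sub>E S. if \<psi> b = \<psi> f then F \<psi> else 0)
       = (\<Sum>\<phi> \<in> (D - {b}) \<rightarrow>\<^sub>E S. F (\<phi>(b := \<phi> f)))"
proof -
  have D: "D = insert b (D - {b})" using assms by auto
  have "(\<Sum>\<psi> \<in> D \<rightarrow>\<^sub>E S. if \<psi> b = \<psi> f then F \<psi> else 0)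
      = (\<Sum>\<phi> \<in> (D - {b}) \<rightarrow>\<^sub>E S. \<Sum>y\<in>S. if y = \<phi> f then F (\<phi>(b := y)) else 0)"
    using assms by (subst D, subst sum_PiE_insert) auto
  also have "\<dots> = (\<Sum>\<phi> \<in> (D - {b}) \<rightarrow>\<^sub>E S. F (\<phi>(b := \<phi> f)))"
    using assms by (intro sum.cong refl) (auto simp: sum.delta')
  finally show ?thesis .
qed

lemma sum_PiE_Plus:
  "(\<Sum>\<psi> \<in> (Inl ` A \<union> Inr ` B) \<rightarrow>\<^sub>E S. F \<psi>) = (\<Sum>\<phi> \<in> A \<rightarrow>\<^sub>E S. \<Sum>\<chi> \<in> B \<rightarrow>\<^sub>E S. F (case_sum \<phi> \<chi>))"
proof -
  have "(\<Sum>\<psi> \<in> (Inl ` A \<union> Inr ` B) \<rightarrow>\<^sub>E S. F \<psi>) = (\<Sum>(\<phi>, \<chi>) \<in> (A \<rightarrow>\<^sub>E S) \<times> (B \<rightarrow>\<^sub>E S). F (case_sum \<phi> \<chi>))"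
    by (rule sum.reindex_bij_witness[where i = "\<lambda>(\<phi>, \<chi>). case_sum \<phi> \<chi>" and j = "\<lambda>\<psi>. (\<psi> \<circ> Inl, \<psi> \<circ> Inr)"])
      (auto simp: PiE_iff extensional_def case_sum_expand_Inr_pointfree inj_image_mem_iff split: sum.splits)
  then show ?thesis
    by (simp add: sum.cartesian_product)
qed

lemma distinct_3_perm:
  assumes "distinct [a, b, c]" "{x, y, z} = {a, b, c}"
  shows "distinct [x, y, z]"
proof -
  have "card {x, y, z} = 3"
    using assms by simp
  then show ?thesis
    by (auto simp: card_insert_if split: if_splits)
qed

definition levi_civita :: "nat \<Rightarrow> nat \<Rightarrow> nat \<Rightarrow> complex" where
  "levi_civita a b c = (if (a, b, c) \<in> {(0, 1, 2), (1, 2, 0), (2, 0, 1)} then 1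
     else if (a, b, c) \<in> {(0, 2, 1), (2, 1, 0), (1, 0, 2)} then -1 else 0)"

lemma less_3_cases: "(x::nat) < 3 \<Longrightarrow> x = 0 \<or> x = 1 \<or> x = 2"
  by auto

lemma sum_lessThan_3: "(\<Sum>x<3. F x) = F 0 + F 1 + F (2::nat)"
  by (simp add: numeral_3_eq_3 lessThan_Suc numeral_2_eq_2 add_ac)

lemma levi_civita_swap: "levi_civita b a c = - levi_civita a b c"
  by (auto simp: levi_civita_def)

lemma levi_civita_cycle: "levi_civita b c a = levi_civita a b c"
  by (auto simp: levi_civita_def)

lemma levi_civita_contract:
  assumes "b < 3" "c < 3" "f < 3" "g < 3"
  shows "(\<Sum>x<3. levi_civita x b c * levi_civita x f g)
       = (if b = f \<and> c = g then 1 else 0) - (if b = g \<and> c = f then 1 else 0)"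
  using less_3_cases[OF assms(1)] less_3_cases[OF assms(2)] less_3_cases[OF assms(3)]
    less_3_cases[OF assms(4)]
  by (elim disjE) (simp_all add: sum_lessThan_3 levi_civita_def)

definition wprod :: "(nat \<Rightarrow> 'a::monoid_mult) \<Rightarrow> (nat \<Rightarrow> nat) \<Rightarrow> nat list \<Rightarrow> 'a" where
  "wprod g \<phi> w = prod_list (map (\<lambda>x. g (\<phi> x)) w)"

lemma wprod_Nil [simp]: "wprod g \<phi> [] = 1"
  by (simp add: wprod_def)

lemma wprod_Cons [simp]: "wprod g \<phi> (x # w) = g (\<phi> x) * wprod g \<phi> w"
  by (simp add: wprod_def)

lemma wprod_append [simp]: "wprod g \<phi> (v @ w) = wprod g \<phi> v * wprod g \<phi> w"
  by (simp add: wprod_def)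

lemma wprod_map: "wprod g \<phi> (map \<sigma> w) = wprod g (\<phi> \<circ> \<sigma>) w"
  by (induction w) auto

lemma wprod_fun_upd: "x \<notin> set w \<Longrightarrow> wprod g (\<phi>(x := y)) w = wprod g \<phi> w"
  by (induction w) auto

text \<open>The value of a two-strand chord diagram whose strands read the words \<open>p\<close> and \<open>q\<close>:
  every label is a chord, \<open>\<phi>\<close> colours it by a basis element of \<open>sl\<^sub>2\<close>, and the two strands
  are evaluated in two commuting copies \<open>l\<close>, \<open>r\<close> of \<open>sl\<^sub>2\<close>.  In \<open>tripod_val\<close> the labels \<open>a\<close>,
  \<open>b\<close>, \<open>c\<close> occur once and are joined at a trivalent vertex.\<close>

definition share_val :: "(nat \<Rightarrow> 'a::ring_1) \<Rightarrow> (nat \<Rightarrow> 'a) \<Rightarrow> nat list \<Rightarrow> nat list \<Rightarrow> 'a" where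
  "share_val l r p q = (\<Sum>\<phi> \<in> set (p @ q) \<rightarrow>\<^sub>E {..<3}. wprod l \<phi> p * wprod r \<phi> q)"

definition tripod_val :: "(complex \<Rightarrow> 'a::ring_1) \<Rightarrow> (nat \<Rightarrow> 'a) \<Rightarrow> (nat \<Rightarrow> 'a) \<Rightarrow>
    nat list \<Rightarrow> nat list \<Rightarrow> nat \<Rightarrow> nat \<Rightarrow> nat \<Rightarrow> 'a" where
  "tripod_val sc l r p q a b c = (\<Sum>\<phi> \<in> set (p @ q) \<rightarrow>\<^sub>E {..<3}.
     sc (levi_civita (\<phi> a) (\<phi> b) (\<phi> c)) * (wprod l \<phi> p * wprod r \<phi> q))"

definition omega :: "(nat \<Rightarrow> 'a::ring_1) \<Rightarrow> (nat \<Rightarrow> 'a) \<Rightarrow> 'a" where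
  "omega l r = (\<Sum>a<3. l a * r a)"

lemma share_val_Nil [simp]: "share_val l r [] [] = 1"
  by (simp add: share_val_def)

lemma share_val_glue:
  assumes "distinct [b, c, f, g]" "{b, c, f, g} \<subseteq> set (p @ q)"
  shows "(\<Sum>\<psi> \<in> set (p @ q) \<rightarrow>\<^sub>E {..<3}. if \<psi> b = \<psi> f \<and> \<psi> c = \<psi> g then wprod l \<psi> p * wprod r \<psi> q else 0)
       = share_val l r (map (id(b := f, c := g)) p) (map (id(b := f, c := g)) q)"
proof -
  let ?F = "\<lambda>\<psi>. wprod l \<psi> p * wprod r \<psi> q"
  let ?\<sigma> = "id(b := f, c := g)"
  have "(\<Sum>\<psi> \<in> set (p @ q) \<rightarrow>\<^sub>E {..<3}. if \<psi> b = \<psi> f \<and> \<psi> c = \<psi> g then ?F \<psi> else 0)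
      = (\<Sum>\<psi> \<in> set (p @ q) \<rightarrow>\<^sub>E {..<3}. if \<psi> b = \<psi> f then (if \<psi> c = \<psi> g then ?F \<psi> else 0) else 0)"
    by (intro sum.cong) auto
  also have "\<dots> = (\<Sum>\<phi> \<in> (set (p @ q) - {b}) \<rightarrow>\<^sub>E {..<3}. if \<phi> c = \<phi> g then ?F (\<phi>(b := \<phi> f)) else 0)"
    using assms by (subst sum_PiE_if_eq) auto
  also have "\<dots> = (\<Sum>\<phi> \<in> (set (p @ q) - {b} - {c}) \<rightarrow>\<^sub>E {..<3}. ?F ((\<phi>(c := \<phi> g))(b := \<phi> f)))"
    using assms by (subst sum_PiE_if_eq) auto
  also have "set (p @ q) - {b} - {c} = set (map ?\<sigma> p @ map ?\<sigma> q)"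
    using assms by auto
  also have "(\<Sum>\<phi> \<in> set (map ?\<sigma> p @ map ?\<sigma> q) \<rightarrow>\<^sub>E {..<3}. ?F ((\<phi>(c := \<phi> g))(b := \<phi> f)))
      = share_val l r (map ?\<sigma> p) (map ?\<sigma> q)"
  proof -
    have "(\<phi>(c := \<phi> g))(b := \<phi> f) = \<phi> \<circ> ?\<sigma>" for \<phi> :: "nat \<Rightarrow> nat"
      using assms by (auto simp: fun_eq_iff)
    then show ?thesis
      by (simp add: share_val_def wprod_map)
  qed
  finally show ?thesis .
qed

inductive_set cas_span :: "(complex \<Rightarrow> 'a::ring_1) \<Rightarrow> 'a \<Rightarrow> (nat \<Rightarrow> 'a) \<Rightarrow> nat \<Rightarrow> 'a set"
  for sc C G m where
  zero: "0 \<in> cas_span sc C G m"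
| add: "x \<in> cas_span sc C G m \<Longrightarrow> y \<in> cas_span sc C G m \<Longrightarrow> x + y \<in> cas_span sc C G m"
| scale: "x \<in> cas_span sc C G m \<Longrightarrow> sc z * x \<in> cas_span sc C G m"
| cas: "x \<in> cas_span sc C G m \<Longrightarrow> C * x \<in> cas_span sc C G m"
| gen: "j < m \<Longrightarrow> G j \<in> cas_span sc C G m"

lemma cas_span_mono: "x \<in> cas_span sc C G m \<Longrightarrow> m \<le> m' \<Longrightarrow> x \<in> cas_span sc C G m'"
  by (induction rule: cas_span.induct) (auto intro: cas_span.intros)

lemma cas_span_subset:
  assumes "\<And>j. j < m \<Longrightarrow> H j \<in> cas_span sc C G m"
  shows "x \<in> cas_span sc C H m \<Longrightarrow> x \<in> cas_span sc C G m"
  by (induction rule: cas_span.induct) (auto intro: cas_span.intros assms)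

lemma cas_span_diff_add: "x - y \<in> cas_span sc C G m \<Longrightarrow> y \<in> cas_span sc C G m \<Longrightarrow> x \<in> cas_span sc C G m"
  using cas_span.add[of "x - y" sc C G m y] by simp

section \<open>Two commuting copies of \<open>sl\<^sub>2\<close> with a common Casimir\<close>

text \<open>\<open>sc\<close> embeds the scalars; \<open>l\<close> and \<open>r\<close> are the images of the basis \<open>x\<^sub>1, x\<^sub>2, x\<^sub>3\<close>
  (indexed by \<open>0, 1, 2\<close>) in two commuting copies of \<open>U(sl\<^sub>2)\<close>, with structure constants
  \<open>kl\<close> and \<open>kr\<close> (for the basis of the paper \<open>\<i>\<close>, and \<open>-\<i>\<close> for right multiplications,
  which reverse products).\<close>

locale sl2_pair =
  fixes sc :: "complex \<Rightarrow> 'a::ring_1" and C :: 'a and l r :: "nat \<Rightarrow> 'a" and kl kr :: complex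
  assumes sc_add: "sc (x + y) = sc x + sc y"
    and sc_mult: "sc (x * y) = sc x * sc y"
    and sc_one [simp]: "sc 1 = 1"
    and sc_commute: "sc z * w = w * sc z"
    and l_r_commute: "a < 3 \<Longrightarrow> b < 3 \<Longrightarrow> l a * r b = r b * l a"
    and l_commutator: "a < 3 \<Longrightarrow> b < 3 \<Longrightarrow>
      l a * l b = l b * l a + sc kl * (\<Sum>c<3. sc (levi_civita a b c) * l c)"
    and r_commutator: "a < 3 \<Longrightarrow> b < 3 \<Longrightarrow>
      r a * r b = r b * r a + sc kr * (\<Sum>c<3. sc (levi_civita a b c) * r c)"
    and l_casimir: "(\<Sum>a<3. l a * l a) = C"
    and r_casimir: "(\<Sum>a<3. r a * r a) = C"
    and casimir_l_commute: "a < 3 \<Longrightarrow> C * l a = l a * C"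
    and casimir_r_commute: "a < 3 \<Longrightarrow> C * r a = r a * C"

lemma sl2_pair_swap:
  assumes "sl2_pair sc C l r kl kr"
  shows "sl2_pair sc C r l kr kl"
proof -
  interpret sl2_pair sc C l r kl kr by (fact assms)
  show ?thesis
    by unfold_locales
      (rule sc_add sc_mult sc_one sc_commute l_r_commute [symmetric] r_commutator l_commutator
        r_casimir l_casimir casimir_r_commute casimir_l_commute; assumption?)+
qed

context sl2_pair
begin

lemma sc_zero [simp]: "sc 0 = 0"
  using sc_add[of 0 0] by simp

lemma sc_uminus: "sc (- x) = - sc x"
  using sc_add[of x "- x"] by (simp add: add_eq_0_iff)

lemma sc_diff: "sc (x - y) = sc x - sc y"
  using sc_add[of x "- y"] by (simp add: sc_uminus)

lemma sc_sum: "sc (sum f I) = (\<Sum>i\<in>I. sc (f i))"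
  by (induction I rule: infinite_finite_induct) (auto simp: sc_add)

lemma sc_left_commute: "x * (sc z * y) = sc z * (x * y)"
  by (metis mult.assoc sc_commute)

text \<open>Instances that are safe as simplification rules (the general rule loops on \<open>x = sc w\<close>).\<close>

lemmas wprod_sc_left_commute = sc_left_commute [of "wprod g \<phi> w"] for g \<phi> w
lemmas l_sc_left_commute = sc_left_commute [of "l a"] for a

lemma wprod_l_commute_r: "\<forall>x\<in>set w. \<phi> x < 3 \<Longrightarrow> b < 3 \<Longrightarrow> wprod l \<phi> w * r b = r b * wprod l \<phi> w"
  by (induction w) (simp_all add: l_r_commute mult.assoc flip: mult.assoc[of "l _"])

lemma wprod_l_r_commute:
  "\<forall>x\<in>set w. \<phi> x < 3 \<Longrightarrow> \<forall>x\<in>set v. \<psi> x < 3 \<Longrightarrow> wprod l \<phi> w * wprod r \<psi> v = wprod r \<psi> v * wprod l \<phi> w"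
  by (induction v) (simp_all add: wprod_l_commute_r mult.assoc flip: mult.assoc[of _ "r _"])

lemma casimir_wprod_l_commute: "\<forall>x\<in>set w. \<phi> x < 3 \<Longrightarrow> C * wprod l \<phi> w = wprod l \<phi> w * C"
  by (induction w) (simp_all add: casimir_l_commute mult.assoc flip: mult.assoc[of C])

lemma omega_casimir_commute: "omega l r * C = C * omega l r"
proof -
  have "omega l r * C = (\<Sum>a<3. l a * (r a * C))"
    by (simp add: omega_def sum_distrib_right mult.assoc)
  also have "\<dots> = (\<Sum>a<3. C * (l a * r a))"
    by (intro sum.cong refl) (metis casimir_l_commute casimir_r_commute mult.assoc lessThan_iff)
  finally show ?thesis
    by (simp add: omega_def sum_distrib_left)
qed

lemma share_val_swap: "share_val r l q p = share_val l r p q"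
proof -
  have "set (q @ p) = set (p @ q)"
    by auto
  then show ?thesis
    unfolding share_val_def
    by (intro sum.cong) (auto intro!: wprod_l_r_commute [symmetric])
qed

lemma tripod_val_swap: "tripod_val sc r l q p a b c = tripod_val sc l r p q a b c"
proof -
  have "set (q @ p) = set (p @ q)"
    by auto
  then show ?thesis
    unfolding tripod_val_def
    by (intro sum.cong arg_cong[where f = "(*) _"]) (auto intro!: wprod_l_r_commute [symmetric])
qed

lemma omega_swap: "omega r l = omega l r"
  unfolding omega_def by (intro sum.cong refl) (simp add: l_r_commute)

lemma tripod_val_antisym: "tripod_val sc l r p q b a c = - tripod_val sc l r p q a b c"
  unfolding tripod_val_def sum_negf [symmetric]
  by (intro sum.cong refl) (subst levi_civita_swap, simp add: sc_uminus)

lemma tripod_val_cycle: "tripod_val sc l r p q b c a = tripod_val sc l r p q a b c"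
  unfolding tripod_val_def by (intro sum.cong refl) (subst levi_civita_cycle, rule refl)

lemma tripod_val_perm:
  assumes "distinct [a, b, c]" "{x, y, z} = {a, b, c}"
  shows "tripod_val sc l r p q x y z = tripod_val sc l r p q a b c
       \<or> tripod_val sc l r p q x y z = - tripod_val sc l r p q a b c"
proof -
  have "distinct [x, y, z]"
    using assms by (rule distinct_3_perm)
  moreover have "x \<in> {a, b, c}" "y \<in> {a, b, c}" "z \<in> {a, b, c}"
    using assms(2) by blast+
  ultimately have "(x, y, z) \<in> {(a, b, c), (b, c, a), (c, a, b), (b, a, c), (a, c, b), (c, b, a)}"
    by auto
  then show ?thesis
    by (auto; metis tripod_val_antisym tripod_val_cycle)
qed

lemma sc_mult_sc: "sc z * (sc w * x) = sc (z * w) * x"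
  by (simp add: sc_mult mult.assoc)

lemma sc_indicator_diff:
  "sc ((if P then 1 else 0) - (if Q then 1 else 0)) * x = (if P then x else 0) - (if Q then x else 0)"
  by (simp add: sc_diff)

lemma sum_levi_civita_l:
  assumes "c < 3"
  shows "(\<Sum>a<3. \<Sum>b<3. sc (levi_civita a b c) * (l a * l b)) = sc kl * l c"
proof -
  have "l 1 * l 2 = l 2 * l 1 + sc kl * l 0" "l 2 * l 0 = l 0 * l 2 + sc kl * l 1"
    "l 0 * l 1 = l 1 * l 0 + sc kl * l 2"
    using l_commutator[of 1 2] l_commutator[of 2 0] l_commutator[of 0 1]
    by (simp_all add: sum_lessThan_3 levi_civita_def)
  then show ?thesis
    using less_3_cases[OF assms]
    by (elim disjE) (simp_all add: sum_lessThan_3 levi_civita_def sc_uminus)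
qed

text \<open>Exchanging two adjacent endpoints on strand 1 costs a commutator, which joins the two
  chords at a new trivalent vertex with the fresh third leg \<open>t\<close>.\<close>

lemma sum_colourings_commutator:
  assumes "t \<notin> D" "u \<in> D" "v \<in> D" "set (A @ B @ q) \<subseteq> D"
    and wt: "\<And>\<phi> y. wt (\<phi>(t := y)) = wt \<phi>"
  shows "(\<Sum>\<phi> \<in> D \<rightarrow>\<^sub>E {..<3}. sc (wt \<phi>) * (wprod l \<phi> (A @ [u, v] @ B) * wprod r \<phi> q))
       = (\<Sum>\<phi> \<in> D \<rightarrow>\<^sub>E {..<3}. sc (wt \<phi>) * (wprod l \<phi> (A @ [v, u] @ B) * wprod r \<phi> q))
       + sc kl * (\<Sum>\<psi> \<in> insert t D \<rightarrow>\<^sub>E {..<3}.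
           sc (wt \<psi> * levi_civita (\<psi> u) (\<psi> v) (\<psi> t)) * (wprod l \<psi> (A @ [t] @ B) * wprod r \<psi> q))"
proof -
  let ?W = "\<lambda>\<phi> x. sc (wt \<phi>) * (wprod l \<phi> A * x * wprod l \<phi> B * wprod r \<phi> q)"
  let ?bracket = "\<lambda>\<phi>. sc kl * (\<Sum>y<3. sc (levi_civita (\<phi> u) (\<phi> v) y) * l y)"
  have t: "t \<notin> set A" "t \<notin> set B" "t \<notin> set q" "t \<noteq> u" "t \<noteq> v"
    using assms by auto
  have "(\<Sum>\<phi> \<in> D \<rightarrow>\<^sub>E {..<3}. sc (wt \<phi>) * (wprod l \<phi> (A @ [u, v] @ B) * wprod r \<phi> q))
      = (\<Sum>\<phi> \<in> D \<rightarrow>\<^sub>E {..<3}. ?W \<phi> (l (\<phi> u) * l (\<phi> v)))"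
    by (simp add: mult.assoc)
  also have "\<dots> = (\<Sum>\<phi> \<in> D \<rightarrow>\<^sub>E {..<3}. ?W \<phi> (l (\<phi> v) * l (\<phi> u)) + ?W \<phi> (?bracket \<phi>))"
  proof (intro sum.cong refl)
    fix \<phi> :: "nat \<Rightarrow> nat" assume "\<phi> \<in> D \<rightarrow>\<^sub>E {..<3}"
    then have "l (\<phi> u) * l (\<phi> v) = l (\<phi> v) * l (\<phi> u) + ?bracket \<phi>"
      using assms by (intro l_commutator) auto
    then show "?W \<phi> (l (\<phi> u) * l (\<phi> v)) = ?W \<phi> (l (\<phi> v) * l (\<phi> u)) + ?W \<phi> (?bracket \<phi>)"
      by (simp only: distrib_left distrib_right)
  qed
  also have "\<dots> = (\<Sum>\<phi> \<in> D \<rightarrow>\<^sub>E {..<3}. ?W \<phi> (l (\<phi> v) * l (\<phi> u)))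
      + (\<Sum>\<phi> \<in> D \<rightarrow>\<^sub>E {..<3}. ?W \<phi> (?bracket \<phi>))"
    by (rule sum.distrib)
  also have "(\<Sum>\<phi> \<in> D \<rightarrow>\<^sub>E {..<3}. ?W \<phi> (l (\<phi> v) * l (\<phi> u)))
      = (\<Sum>\<phi> \<in> D \<rightarrow>\<^sub>E {..<3}. sc (wt \<phi>) * (wprod l \<phi> (A @ [v, u] @ B) * wprod r \<phi> q))"
    by (simp add: mult.assoc)
  also have "(\<Sum>\<phi> \<in> D \<rightarrow>\<^sub>E {..<3}. ?W \<phi> (?bracket \<phi>))
      = sc kl * (\<Sum>\<phi> \<in> D \<rightarrow>\<^sub>E {..<3}. \<Sum>y<3. sc (wt \<phi> * levi_civita (\<phi> u) (\<phi> v) y)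
          * (wprod l \<phi> A * l y * wprod l \<phi> B * wprod r \<phi> q))"
    by (simp add: sum_distrib_left sum_distrib_right wprod_sc_left_commute l_sc_left_commute
        sc_mult_sc mult.assoc mult.left_commute)
  also have "(\<Sum>\<phi> \<in> D \<rightarrow>\<^sub>E {..<3}. \<Sum>y<3. sc (wt \<phi> * levi_civita (\<phi> u) (\<phi> v) y)
          * (wprod l \<phi> A * l y * wprod l \<phi> B * wprod r \<phi> q))
      = (\<Sum>\<psi> \<in> insert t D \<rightarrow>\<^sub>E {..<3}.
           sc (wt \<psi> * levi_civita (\<psi> u) (\<psi> v) (\<psi> t)) * (wprod l \<psi> (A @ [t] @ B) * wprod r \<psi> q))"
    using assms t by (simp add: sum_PiE_insert wprod_fun_upd mult.assoc)
  finally show ?thesis .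
qed

lemma share_val_commutator:
  assumes "t \<notin> set (A @ [u, v] @ B @ q)" "u \<in> set (A @ B @ q)" "v \<in> set (A @ B @ q)"
  shows "share_val l r (A @ [u, v] @ B) q
       = share_val l r (A @ [v, u] @ B) q + sc kl * tripod_val sc l r (A @ [t] @ B) q u v t"
proof -
  have "set ((A @ [u, v] @ B) @ q) = set (A @ B @ q)" "set ((A @ [v, u] @ B) @ q) = set (A @ B @ q)"
    "set ((A @ [t] @ B) @ q) = insert t (set (A @ B @ q))"
    using assms by auto
  then show ?thesis
    using sum_colourings_commutator[of t "set (A @ B @ q)" u v A B q "\<lambda>_. 1"] assms
    by (simp add: share_val_def tripod_val_def)
qed

lemma tripod_val_adjacent_legs:
  assumes "a \<noteq> b" "a \<notin> set (A @ B @ q)" "b \<notin> set (A @ B @ q)" "c \<in> set (A @ B @ q)"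
  shows "tripod_val sc l r (A @ [a, b] @ B) q a b c = sc kl * share_val l r (A @ [c] @ B) q"
proof -
  define D where "D = set (A @ B @ q)"
  have D: "set ((A @ [a, b] @ B) @ q) = insert a (insert b D)" "set ((A @ [c] @ B) @ q) = D"
    using assms by (auto simp: D_def)
  have c: "c \<noteq> a" "c \<noteq> b"
    using assms by auto
  have "tripod_val sc l r (A @ [a, b] @ B) q a b c
      = (\<Sum>\<phi> \<in> D \<rightarrow>\<^sub>E {..<3}. \<Sum>y<3. \<Sum>x<3.
           sc (levi_civita x y (\<phi> c)) * (wprod l \<phi> A * (l x * l y) * wprod l \<phi> B * wprod r \<phi> q))"
    unfolding tripod_val_def D using assms c
    by (simp add: D_def sum_PiE_insert wprod_fun_upd mult.assoc insert_commute)
  also have "\<dots> = (\<Sum>\<phi> \<in> D \<rightarrow>\<^sub>E {..<3}. wprod l \<phi> A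
      * (\<Sum>x<3. \<Sum>y<3. sc (levi_civita x y (\<phi> c)) * (l x * l y)) * wprod l \<phi> B * wprod r \<phi> q)"
    by (intro sum.cong refl)
      (subst sum.swap, simp add: sum_distrib_left sum_distrib_right wprod_sc_left_commute l_sc_left_commute mult.assoc)
  also have "\<dots> = (\<Sum>\<phi> \<in> D \<rightarrow>\<^sub>E {..<3}. wprod l \<phi> A * (sc kl * l (\<phi> c)) * wprod l \<phi> B * wprod r \<phi> q)"
    using assms by (intro sum.cong refl) (simp add: sum_levi_civita_l PiE_iff D_def)
  also have "\<dots> = sc kl * share_val l r (A @ [c] @ B) q"
    unfolding share_val_def D by (simp add: sum_distrib_left wprod_sc_left_commute mult.assoc)
  finally show ?thesis .
qed

text \<open>Sliding the leg \<open>a\<close> of a trivalent vertex past an adjacent chord endpoint \<open>f\<close>: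
  the commutator creates a second vertex, and the contraction of the two Levi-Civita
  symbols (with a fresh label \<open>g\<close>) resolves the pair of vertices into two diagrams with
  one chord fewer.\<close>

lemma tripod_val_slide:
  assumes a: "a \<notin> set (A @ B @ q)" and bcf: "{b, c, f} \<subseteq> set (A @ B @ q)" "distinct [b, c, f]"
    and g: "g \<notin> set (A @ [a, f] @ B @ q)"
  shows "tripod_val sc l r (A @ [a, f] @ B) q a b c = tripod_val sc l r (A @ [f, a] @ B) q a b c
     + sc kl * (share_val l r (map (id(b := f, c := g)) (A @ [g] @ B)) (map (id(b := f, c := g)) q)
              - share_val l r (map (id(b := g, c := f)) (A @ [g] @ B)) (map (id(b := g, c := f)) q))"
proof -
  define D where "D = set (A @ B @ q)"
  let ?F = "\<lambda>\<psi>. wprod l \<psi> (A @ [g] @ B) * wprod r \<psi> q"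
  let ?wt = "\<lambda>\<phi>. levi_civita (\<phi> a) (\<phi> b) (\<phi> c)"
  have D: "set ((A @ [a, f] @ B) @ q) = insert a D" "set ((A @ [f, a] @ B) @ q) = insert a D"
    "set ((A @ [g] @ B) @ q) = insert g D"
    using bcf by (auto simp: D_def)
  have fresh: "a \<notin> D" "g \<notin> D" "a \<noteq> g" "a \<notin> {b, c, f}" "g \<notin> {b, c, f}"
    "a \<notin> set A" "a \<notin> set B" "a \<notin> set q"
    using a g bcf by (auto simp: D_def)
  have "tripod_val sc l r (A @ [a, f] @ B) q a b c = tripod_val sc l r (A @ [f, a] @ B) q a b c
      + sc kl * (\<Sum>\<psi> \<in> insert g (insert a D) \<rightarrow>\<^sub>E {..<3}.
          sc (?wt \<psi> * levi_civita (\<psi> a) (\<psi> f) (\<psi> g)) * ?F \<psi>)"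
    unfolding tripod_val_def D using fresh bcf
    by (intro sum_colourings_commutator) (auto simp: D_def)
  also have "(\<Sum>\<psi> \<in> insert g (insert a D) \<rightarrow>\<^sub>E {..<3}.
      sc (?wt \<psi> * levi_civita (\<psi> a) (\<psi> f) (\<psi> g)) * ?F \<psi>)
    = (\<Sum>\<psi> \<in> insert g D \<rightarrow>\<^sub>E {..<3}.
      sc (\<Sum>x<3. levi_civita x (\<psi> b) (\<psi> c) * levi_civita x (\<psi> f) (\<psi> g)) * ?F \<psi>)"
    using fresh unfolding insert_commute[of g a]
    by (simp add: sum_PiE_insert wprod_fun_upd sc_sum sum_distrib_right)
  also have "\<dots> = (\<Sum>\<psi> \<in> insert g D \<rightarrow>\<^sub>E {..<3}. if \<psi> b = \<psi> f \<and> \<psi> c = \<psi> g then ?F \<psi> else 0)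
      - (\<Sum>\<psi> \<in> insert g D \<rightarrow>\<^sub>E {..<3}. if \<psi> b = \<psi> g \<and> \<psi> c = \<psi> f then ?F \<psi> else 0)"
    unfolding sum_subtractf [symmetric]
  proof (intro sum.cong refl)
    fix \<psi> :: "nat \<Rightarrow> nat" assume "\<psi> \<in> insert g D \<rightarrow>\<^sub>E {..<3}"
    then have "\<psi> b < 3" "\<psi> c < 3" "\<psi> f < 3" "\<psi> g < 3"
      using bcf by (auto simp: D_def)
    then show "sc (\<Sum>x<3. levi_civita x (\<psi> b) (\<psi> c) * levi_civita x (\<psi> f) (\<psi> g)) * ?F \<psi>
        = (if \<psi> b = \<psi> f \<and> \<psi> c = \<psi> g then ?F \<psi> else 0)
        - (if \<psi> b = \<psi> g \<and> \<psi> c = \<psi> f then ?F \<psi> else 0)"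
      by (simp only: levi_civita_contract sc_indicator_diff)
  qed
  also have "\<dots> = share_val l r (map (id(b := f, c := g)) (A @ [g] @ B)) (map (id(b := f, c := g)) q)
      - share_val l r (map (id(b := g, c := f)) (A @ [g] @ B)) (map (id(b := g, c := f)) q)"
    using bcf fresh share_val_glue[of b c f g "A @ [g] @ B" q l r]
      share_val_glue[of b c g f "A @ [g] @ B" q l r]
    unfolding D(3) [symmetric] by (auto simp: D_def)
  finally show ?thesis .
qed

lemma share_val_bridge:
  assumes "u \<notin> set p" "u \<notin> set q"
  shows "share_val l r (u # p) (u # q) = omega l r * share_val l r p q"
proof -
  have "share_val l r (u # p) (u # q)
      = (\<Sum>\<phi> \<in> set (p @ q) \<rightarrow>\<^sub>E {..<3}. \<Sum>y<3. l y * (wprod l \<phi> p * r y) * wprod r \<phi> q)"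
    unfolding share_val_def using assms by (simp add: sum_PiE_insert wprod_fun_upd mult.assoc)
  also have "\<dots> = (\<Sum>\<phi> \<in> set (p @ q) \<rightarrow>\<^sub>E {..<3}. \<Sum>y<3. (l y * r y) * (wprod l \<phi> p * wprod r \<phi> q))"
    by (intro sum.cong refl)
      (simp add: wprod_l_commute_r PiE_iff mult.assoc)
  also have "\<dots> = omega l r * share_val l r p q"
    by (simp add: omega_def share_val_def sum_distrib_left sum_distrib_right sum.swap [of _ "{..<3}"])
  finally show ?thesis .
qed

lemma share_val_arch:
  assumes "u \<notin> set (A @ B @ q)"
  shows "share_val l r (A @ [u, u] @ B) q = C * share_val l r (A @ B) q"
proof -
  have "share_val l r (A @ [u, u] @ B) q
      = (\<Sum>\<phi> \<in> set (A @ B @ q) \<rightarrow>\<^sub>E {..<3}. \<Sum>y<3. wprod l \<phi> A * (l y * l y) * wprod l \<phi> B * wprod r \<phi> q)"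
    unfolding share_val_def using assms
    by (simp add: sum_PiE_insert wprod_fun_upd mult.assoc insert_commute)
  also have "\<dots> = (\<Sum>\<phi> \<in> set (A @ B @ q) \<rightarrow>\<^sub>E {..<3}. wprod l \<phi> A * C * wprod l \<phi> B * wprod r \<phi> q)"
    by (simp add: l_casimir [symmetric] sum_distrib_left sum_distrib_right)
  also have "\<dots> = (\<Sum>\<phi> \<in> set (A @ B @ q) \<rightarrow>\<^sub>E {..<3}. C * (wprod l \<phi> A * wprod l \<phi> B * wprod r \<phi> q))"
    by (intro sum.cong refl) (simp add: casimir_wprod_l_commute PiE_iff flip: mult.assoc)
  finally show ?thesis
    by (simp add: share_val_def sum_distrib_left mult.assoc)
qed

abbreviation omega_span :: "nat \<Rightarrow> 'a set" where
  "omega_span \<equiv> cas_span sc C (\<lambda>j. omega l r ^ j)"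

lemma cas_span_uminus: "x \<in> cas_span sc C G m \<Longrightarrow> - x \<in> cas_span sc C G m"
  using cas_span.scale[of x sc C G m "- 1"] by (simp add: sc_uminus)

lemma cas_span_diff:
  "x \<in> cas_span sc C G m \<Longrightarrow> y \<in> cas_span sc C G m \<Longrightarrow> x - y \<in> cas_span sc C G m"
  using cas_span.add[of x sc C G m "- y"] by (simp add: cas_span_uminus)

lemma omega_mult_in_span: "x \<in> omega_span m \<Longrightarrow> omega l r * x \<in> omega_span (Suc m)"
proof (induction rule: cas_span.induct)
  case (scale x z)
  then show ?case
    by (simp add: sc_left_commute cas_span.scale)
next
  case (cas x)
  then show ?case
    by (metis omega_casimir_commute mult.assoc cas_span.cas)
next
  case (gen j)
  have "(\<lambda>j. omega l r ^ j) (Suc j) \<in> omega_span (Suc m)"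
    by (rule cas_span.gen) (use gen in simp)
  then show ?case
    by simp
qed (auto simp: distrib_left intro: cas_span.intros)

end

section \<open>Moving chord endpoints\<close>

lemma in_set_iff_count_list: "x \<in> set xs \<longleftrightarrow> 0 < count_list xs x"
  by (induction xs) auto

lemma distinct_iff_count_list_le_1: "distinct xs \<longleftrightarrow> (\<forall>x. count_list xs x \<le> 1)"
proof (induction xs)
  case (Cons a xs)
  have "(\<forall>x. count_list (a # xs) x \<le> 1) \<longleftrightarrow> count_list xs a = 0 \<and> (\<forall>x. count_list xs x \<le> 1)"
    by (auto simp: le_Suc_eq split: if_splits)
  with Cons.IH show ?case
    by (simp add: count_list_0_iff)
qed simp

definition chord_word :: "nat list \<Rightarrow> bool" where
  "chord_word w \<longleftrightarrow> (\<forall>x\<in>set w. count_list w x = 2)"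

definition tripod_word :: "nat list \<Rightarrow> nat \<Rightarrow> nat \<Rightarrow> nat \<Rightarrow> bool" where
  "tripod_word w a b c \<longleftrightarrow> distinct [a, b, c]
     \<and> count_list w a = 1 \<and> count_list w b = 1 \<and> count_list w c = 1
     \<and> (\<forall>x\<in>set w. x \<notin> {a, b, c} \<longrightarrow> count_list w x = 2)"

lemma chord_word_count_cong:
  "chord_word w \<Longrightarrow> (\<And>x. x \<in> set w' \<Longrightarrow> count_list w' x = count_list w x) \<Longrightarrow> chord_word w'"
  unfolding chord_word_def by (metis count_list_0_iff)

lemma chord_word_append_swap: "chord_word (p @ q) \<Longrightarrow> chord_word (q @ p)"
  by (erule chord_word_count_cong) simp

lemma tripod_word_count_cong:
  "tripod_word w a b c \<Longrightarrow> (\<And>x. count_list w' x = count_list w x) \<Longrightarrow> tripod_word w' a b c"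
  unfolding tripod_word_def by (metis in_set_iff_count_list)

lemma tripod_word_append_swap: "tripod_word (p @ q) a b c \<Longrightarrow> tripod_word (q @ p) a b c"
  unfolding tripod_word_def by auto

lemma tripod_word_perm:
  assumes w: "tripod_word w a b c" and xyz: "{x, y, z} = {a, b, c}"
  shows "tripod_word w x y z"
proof -
  have "x \<in> {a, b, c}" "y \<in> {a, b, c}" "z \<in> {a, b, c}"
    using xyz by blast+
  then show ?thesis
    using w distinct_3_perm[OF _ xyz] unfolding tripod_word_def xyz by auto
qed

lemma chord_word_glue:
  assumes "distinct [b, c, f, g]" "count_list w b = 1" "count_list w c = 1" "count_list w f = 1"
    "count_list w g = 1" "\<forall>t\<in>set w. t \<notin> {b, c, f, g} \<longrightarrow> count_list w t = 2"
  shows "chord_word (map (id(b := f, c := g)) w)"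
  unfolding chord_word_def
proof
  let ?w = "map (id(b := f, c := g)) w"
  have count_f: "count_list ?w f = count_list w f + count_list w b"
    and count_g: "count_list ?w g = count_list w g + count_list w c"
    and count_other: "t \<notin> {b, c, f, g} \<Longrightarrow> count_list ?w t = count_list w t"
    and glued: "b \<notin> set ?w" "c \<notin> set ?w" for t
    using assms(1) by (induction w) auto
  fix t assume t: "t \<in> set ?w"
  then consider "t = f" | "t = g" | "t \<notin> {b, c, f, g}"
    using glued by blast
  then show "count_list ?w t = 2"
  proof cases
    case 3
    then have "t \<in> set w"
      using t count_other by (metis count_list_0_iff)
    then show ?thesis
      using 3 assms(6) count_other by simp
  qed (use assms(2-5) count_f count_g in simp_all)
qed

lemma tripod_word_slide_counts:
  assumes "tripod_word (A @ [x, f] @ R @ q) x y z" "f \<notin> {x, y, z}" "g \<notin> set (A @ [x, f] @ R @ q)"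
  shows "x \<notin> set (A @ R @ q)" "{y, z, f} \<subseteq> set (A @ R @ q)" "distinct [y, z, f, g]"
    "count_list ((A @ [g] @ R) @ q) y = 1" "count_list ((A @ [g] @ R) @ q) z = 1"
    "count_list ((A @ [g] @ R) @ q) f = 1" "count_list ((A @ [g] @ R) @ q) g = 1"
    "\<forall>t\<in>set ((A @ [g] @ R) @ q). t \<notin> {y, z, f, g} \<longrightarrow> count_list ((A @ [g] @ R) @ q) t = 2"
proof -
  let ?w = "A @ [x, f] @ R @ q"
  have d: "distinct [x, y, z]" and cnt: "count_list ?w x = 1" "count_list ?w y = 1" "count_list ?w z = 1"
    and two: "\<forall>t\<in>set ?w. t \<notin> {x, y, z} \<longrightarrow> count_list ?w t = 2"
    using assms(1) unfolding tripod_word_def by blast+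
  have cnt_rest: "count_list (A @ R @ q) x = 0" "count_list (A @ R @ q) y = 1"
    "count_list (A @ R @ q) z = 1" "count_list (A @ R @ q) f = 1"
    using cnt d assms(2) two by auto
  then show x: "x \<notin> set (A @ R @ q)" and yzf: "{y, z, f} \<subseteq> set (A @ R @ q)"
    by (simp_all only: count_list_0_iff [symmetric] insert_subset in_set_iff_count_list) simp_all
  show dist: "distinct [y, z, f, g]"
    using d assms(2,3) yzf by auto
  have count_W: "count_list ((A @ [g] @ R) @ q) t = count_list (A @ R @ q) t + (if t = g then 1 else 0)" for t
    by simp
  show "count_list ((A @ [g] @ R) @ q) y = 1" "count_list ((A @ [g] @ R) @ q) z = 1"
    "count_list ((A @ [g] @ R) @ q) f = 1" "count_list ((A @ [g] @ R) @ q) g = 1"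
    using cnt_rest assms(3) dist unfolding count_W by (auto simp: count_list_0_iff)
  show "\<forall>t\<in>set ((A @ [g] @ R) @ q). t \<notin> {y, z, f, g} \<longrightarrow> count_list ((A @ [g] @ R) @ q) t = 2"
  proof (intro ballI impI)
    fix t assume t: "t \<in> set ((A @ [g] @ R) @ q)" "t \<notin> {y, z, f, g}"
    then have "t \<in> set (A @ R @ q)"
      by auto
    with x have "t \<noteq> x"
      by blast
    with t \<open>t \<in> set (A @ R @ q)\<close> have "count_list ?w t = 2"
      by (intro two [rule_format]) auto
    with t \<open>t \<noteq> x\<close> show "count_list ((A @ [g] @ R) @ q) t = 2"
      by (simp add: count_W)
  qed
qed

definition span_below :: "(complex \<Rightarrow> 'a::ring_1) \<Rightarrow> 'a \<Rightarrow> (nat \<Rightarrow> 'a) \<Rightarrow> (nat \<Rightarrow> 'a) \<Rightarrow> nat \<Rightarrow> bool" where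
  "span_below sc C l r L \<longleftrightarrow> (\<forall>p q. length (p @ q) < L \<longrightarrow> chord_word (p @ q) \<longrightarrow>
     share_val l r p q \<in> cas_span sc C (\<lambda>j. omega l r ^ j) (length (p @ q) div 2 + 1))"

lemma span_belowD:
  "span_below sc C l r L \<Longrightarrow> length (p @ q) < L \<Longrightarrow> chord_word (p @ q) \<Longrightarrow>
   share_val l r p q \<in> cas_span sc C (\<lambda>j. omega l r ^ j) (length (p @ q) div 2 + 1)"
  unfolding span_below_def by blast

lemma span_below_mono: "span_below sc C l r L \<Longrightarrow> L' \<le> L \<Longrightarrow> span_below sc C l r L'"
  unfolding span_below_def by auto

lemma length_filter_mem_3:
  "distinct [a, b, c] \<Longrightarrow>
   length (filter (\<lambda>t. t \<in> {a, b, c}) w) = count_list w a + count_list w b + count_list w c"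
  by (induction w) auto

context sl2_pair
begin

lemma span_below_swap: "span_below sc C l r L \<Longrightarrow> span_below sc C r l L"
  unfolding span_below_def omega_swap
  by (metis add.commute chord_word_append_swap length_append share_val_swap)

lemma share_val_glue_in_span:
  assumes "span_below sc C l r L" "length (p @ q) < L" "distinct [b, c, f, g]"
    "count_list (p @ q) b = 1" "count_list (p @ q) c = 1" "count_list (p @ q) f = 1"
    "count_list (p @ q) g = 1" "\<forall>t\<in>set (p @ q). t \<notin> {b, c, f, g} \<longrightarrow> count_list (p @ q) t = 2"
  shows "share_val l r (map (id(b := f, c := g)) p) (map (id(b := f, c := g)) q)
      \<in> omega_span (length (p @ q) div 2 + 1)"
  using span_belowD[OF assms(1), of "map (id(b := f, c := g)) p" "map (id(b := f, c := g)) q"]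
    chord_word_glue[OF assms(3-8)] assms(2)
  by simp

lemma tripod_val_adjacent_in_span:
  assumes span: "span_below sc C l r (length (A @ [x, y] @ B @ q))"
    and tw: "tripod_word (A @ [x, y] @ B @ q) x y z"
  shows "tripod_val sc l r (A @ [x, y] @ B) q x y z \<in> omega_span ((length (A @ [x, y] @ B @ q) + 1) div 2)"
proof -
  let ?w = "A @ [x, y] @ B @ q"
  have d: "distinct [x, y, z]" and cnt: "count_list ?w x = 1" "count_list ?w y = 1" "count_list ?w z = 1"
    and two: "\<forall>t\<in>set ?w. t \<notin> {x, y, z} \<longrightarrow> count_list ?w t = 2"
    using tw unfolding tripod_word_def by blast+
  have legs: "x \<notin> set (A @ B @ q)" "y \<notin> set (A @ B @ q)" "count_list (A @ B @ q) z = 1"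
    using d cnt by (auto simp add: in_set_iff_count_list)
  have "tripod_val sc l r (A @ [x, y] @ B) q x y z = sc kl * share_val l r (A @ [z] @ B) q"
    using d legs by (intro tripod_val_adjacent_legs) (auto simp add: in_set_iff_count_list)
  moreover have "chord_word ((A @ [z] @ B) @ q)"
    unfolding chord_word_def
  proof
    fix t assume t: "t \<in> set ((A @ [z] @ B) @ q)"
    show "count_list ((A @ [z] @ B) @ q) t = 2"
    proof (cases "t = z")
      case False
      with t legs have "t \<notin> {x, y, z}" "t \<in> set ?w"
        by auto
      with two False show ?thesis
        by auto
    qed (use legs in simp)
  qed
  then have "share_val l r (A @ [z] @ B) q \<in> omega_span (length ((A @ [z] @ B) @ q) div 2 + 1)"
    using span by (intro span_belowD) auto
  ultimately show ?thesis
    by (auto intro: cas_span.scale elim: cas_span_mono)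
qed

lemma tripod_val_slide_in_span:
  assumes span: "span_below sc C l r (length (A @ [x, f] @ R @ q))"
    and tw: "tripod_word (A @ [x, f] @ R @ q) x y z" and f: "f \<notin> {x, y, z}"
  shows "tripod_val sc l r (A @ [x, f] @ R) q x y z - tripod_val sc l r (A @ [f, x] @ R) q x y z
      \<in> omega_span ((length (A @ [x, f] @ R @ q) + 1) div 2)"
proof -
  let ?w = "A @ [x, f] @ R @ q"
  obtain g where g: "g \<notin> set ?w"
    using ex_new_if_finite[OF infinite_UNIV_nat finite_set] by blast
  let ?W = "(A @ [g] @ R) @ q"
  note counts = tripod_word_slide_counts[OF tw f g]
  have len: "length ?W < length ?w" "length ?W div 2 + 1 = (length ?w + 1) div 2"
    by simp_all
  have "share_val l r (map (id(y := f, z := g)) (A @ [g] @ R)) (map (id(y := f, z := g)) q)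
      \<in> omega_span ((length ?w + 1) div 2)"
    using share_val_glue_in_span[OF span len(1) counts(3-8)] len(2) by simp
  moreover have "share_val l r (map (id(y := g, z := f)) (A @ [g] @ R)) (map (id(y := g, z := f)) q)
      \<in> omega_span ((length ?w + 1) div 2)"
    using share_val_glue_in_span[OF span len(1), of y z g f] counts(3-8) len(2)
    by (simp add: insert_commute)
  moreover have "tripod_val sc l r (A @ [x, f] @ R) q x y z = tripod_val sc l r (A @ [f, x] @ R) q x y z
     + sc kl * (share_val l r (map (id(y := f, z := g)) (A @ [g] @ R)) (map (id(y := f, z := g)) q)
              - share_val l r (map (id(y := g, z := f)) (A @ [g] @ R)) (map (id(y := g, z := f)) q))"
    by (rule tripod_val_slide[OF counts(1,2) _ g]) (use counts(3) in simp)
  ultimately show ?thesis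
    by (simp add: cas_span.scale cas_span_diff)
qed

text \<open>Induction on the distance between two legs \<open>x\<close>, \<open>y\<close> of a vertex on strand 1:
  \<open>x\<close> is slid towards \<open>y\<close> until they are adjacent.\<close>

lemma tripod_val_in_span_strand1:
  assumes "span_below sc C l r (length (A @ [x] @ M @ [y] @ B @ q))"
    and "tripod_word (A @ [x] @ M @ [y] @ B @ q) x y z" and "set M \<inter> {x, y, z} = {}"
  shows "tripod_val sc l r (A @ [x] @ M @ [y] @ B) q x y z
      \<in> omega_span ((length (A @ [x] @ M @ [y] @ B @ q) + 1) div 2)"
  using assms
proof (induction M arbitrary: A)
  case Nil
  then show ?case
    using tripod_val_adjacent_in_span by simp
next
  case (Cons f M)
  have "tripod_val sc l r (A @ [x, f] @ M @ [y] @ B) q x y z - tripod_val sc l r (A @ [f, x] @ M @ [y] @ B) q x y z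
      \<in> omega_span ((length (A @ [x] @ (f # M) @ [y] @ B @ q) + 1) div 2)"
    using Cons.prems tripod_val_slide_in_span[of A x f "M @ [y] @ B" q y z] by simp
  moreover have "tripod_val sc l r ((A @ [f]) @ [x] @ M @ [y] @ B) q x y z
      \<in> omega_span ((length ((A @ [f]) @ [x] @ M @ [y] @ B @ q) + 1) div 2)"
  proof (rule Cons.IH)
    show "span_below sc C l r (length ((A @ [f]) @ [x] @ M @ [y] @ B @ q))"
      using Cons.prems(1) by simp
    show "tripod_word ((A @ [f]) @ [x] @ M @ [y] @ B @ q) x y z"
      by (rule tripod_word_count_cong[OF Cons.prems(2)]) simp
  qed (use Cons.prems(3) in simp)
  ultimately show ?case
    by (simp add: cas_span_diff_add)
qed

end

context sl2_pair
begin

lemma tripod_val_in_span_left: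
  assumes span: "span_below sc C l r (length (p @ q))" and tw: "tripod_word (p @ q) a b c"
    and two: "2 \<le> length (filter (\<lambda>t. t \<in> {a, b, c}) p)"
  shows "tripod_val sc l r p q a b c \<in> omega_span ((length (p @ q) + 1) div 2)"
proof -
  define leg where "leg t \<longleftrightarrow> t \<in> {a, b, c}" for t
  have d: "distinct [a, b, c]" and cnt: "count_list (p @ q) a = 1" "count_list (p @ q) b = 1"
    "count_list (p @ q) c = 1"
    using tw unfolding tripod_word_def by blast+
  have two: "2 \<le> length (filter leg p)"
    using two by (simp add: leg_def [abs_def])
  then have "filter leg p \<noteq> []"
    by auto
  then have "\<exists>x\<in>set p. leg x"
    by (simp add: filter_empty_conv)
  then obtain A x p' where p: "p = A @ x # p'" and x: "leg x" and A: "\<forall>t\<in>set A. \<not> leg t"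
    by (rule split_list_first_propE)
  then have "filter leg p = x # filter leg p'"
    by (simp add: filter_False)
  with two have "filter leg p' \<noteq> []"
    by auto
  then have "\<exists>y\<in>set p'. leg y"
    by (simp add: filter_empty_conv)
  then obtain M y B where p': "p' = M @ y # B" and y: "leg y" and M: "\<forall>t\<in>set M. \<not> leg t"
    by (rule split_list_first_propE)
  have x: "x \<in> {a, b, c}" and y: "y \<in> {a, b, c}" and M: "\<forall>t\<in>set M. t \<notin> {a, b, c}"
    using x y M by (simp_all add: leg_def)
  have "count_list (p @ q) x = 1"
    using x cnt by auto
  then have "x \<noteq> y"
    unfolding p p' by auto
  then obtain z where xyz: "{x, y, z} = {a, b, c}"
    using d x y by (auto simp: insert_commute)
  have "tripod_val sc l r (A @ [x] @ M @ [y] @ B) q x y z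
      \<in> omega_span ((length (A @ [x] @ M @ [y] @ B @ q) + 1) div 2)"
  proof (rule tripod_val_in_span_strand1)
    show "span_below sc C l r (length (A @ [x] @ M @ [y] @ B @ q))"
      using span unfolding p p' by simp
    show "tripod_word (A @ [x] @ M @ [y] @ B @ q) x y z"
      using tripod_word_perm[OF tw xyz] unfolding p p' by simp
    show "set M \<inter> {x, y, z} = {}"
      using M unfolding xyz by blast
  qed
  then have "tripod_val sc l r p q x y z \<in> omega_span ((length (p @ q) + 1) div 2)"
    by (simp add: p p')
  with tripod_val_perm[OF d xyz] show ?thesis
    by (metis cas_span_uminus minus_minus)
qed

lemma tripod_val_in_span:
  assumes span: "span_below sc C l r (length (p @ q))" and tw: "tripod_word (p @ q) a b c"
  shows "tripod_val sc l r p q a b c \<in> omega_span ((length (p @ q) + 1) div 2)"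
proof -
  interpret swapped: sl2_pair sc C r l kr kl
    by (rule sl2_pair_swap) (rule sl2_pair_axioms)
  let ?legs = "\<lambda>w. length (filter (\<lambda>t. t \<in> {a, b, c}) w)"
  have "?legs p + ?legs q = 3"
    using tw length_filter_mem_3[of a b c "p @ q"] unfolding tripod_word_def by simp
  then consider "2 \<le> ?legs p" | "2 \<le> ?legs q"
    by linarith
  then show ?thesis
  proof cases
    case 1
    then show ?thesis
      using span tw by (rule tripod_val_in_span_left [rotated 2])
  next
    case 2
    have "tripod_val sc r l q p a b c \<in> swapped.omega_span ((length (q @ p) + 1) div 2)"
      using span_below_swap[OF span] tripod_word_append_swap[OF tw] 2
      by (intro swapped.tripod_val_in_span_left) (simp_all add: add.commute)
    then show ?thesis
      by (simp add: tripod_val_swap omega_swap add.commute)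
  qed
qed

lemma share_val_exchange_in_span:
  assumes span: "span_below sc C l r (length (A @ [u, v] @ B @ q))"
    and cw: "chord_word (A @ [u, v] @ B @ q)"
  shows "share_val l r (A @ [u, v] @ B) q - share_val l r (A @ [v, u] @ B) q
      \<in> omega_span (length (A @ [u, v] @ B @ q) div 2)"
proof (cases "u = v")
  case True
  then show ?thesis
    by (simp add: cas_span.zero)
next
  case False
  obtain t where t: "t \<notin> set (A @ [u, v] @ B @ q)"
    using ex_new_if_finite[OF infinite_UNIV_nat finite_set] by blast
  have cnt: "count_list (A @ B @ q) u = 1" "count_list (A @ B @ q) v = 1"
    using cw False unfolding chord_word_def by auto
  have "tripod_word ((A @ [t] @ B) @ q) u v t"
    unfolding tripod_word_def
  proof (intro conjI ballI impI)
    fix x assume x: "x \<in> set ((A @ [t] @ B) @ q)" "x \<notin> {u, v, t}"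
    then have "x \<in> set (A @ [u, v] @ B @ q)"
      by auto
    with cw have "count_list (A @ [u, v] @ B @ q) x = 2"
      unfolding chord_word_def by blast
    with x show "count_list ((A @ [t] @ B) @ q) x = 2"
      by simp
  qed (use False t cnt in auto)
  then have "tripod_val sc l r (A @ [t] @ B) q u v t
      \<in> omega_span ((length ((A @ [t] @ B) @ q) + 1) div 2)"
    using span_below_mono[OF span] by (intro tripod_val_in_span) auto
  moreover have "share_val l r (A @ [u, v] @ B) q
      = share_val l r (A @ [v, u] @ B) q + sc kl * tripod_val sc l r (A @ [t] @ B) q u v t"
    using t cnt by (intro share_val_commutator) (auto simp: in_set_iff_count_list)
  ultimately show ?thesis
    by (simp add: cas_span.scale)
qed

lemma share_val_move_in_span:
  assumes "span_below sc C l r (length (A @ M @ [u] @ B @ q))" and "chord_word (A @ M @ [u] @ B @ q)"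
  shows "share_val l r (A @ M @ [u] @ B) q - share_val l r (A @ [u] @ M @ B) q
      \<in> omega_span (length (A @ M @ [u] @ B @ q) div 2)"
  using assms
proof (induction M arbitrary: B rule: rev_induct)
  case Nil
  then show ?case
    by (simp add: cas_span.zero)
next
  case (snoc v M)
  have "share_val l r ((A @ M) @ [v, u] @ B) q - share_val l r ((A @ M) @ [u, v] @ B) q
      \<in> omega_span (length (A @ (M @ [v]) @ [u] @ B @ q) div 2)"
    using snoc.prems share_val_exchange_in_span[of "A @ M" v u B q] by simp
  moreover have "share_val l r (A @ M @ [u] @ (v # B)) q - share_val l r (A @ [u] @ M @ (v # B)) q
      \<in> omega_span (length (A @ (M @ [v]) @ [u] @ B @ q) div 2)"
  proof -
    have "chord_word (A @ M @ [u] @ (v # B) @ q)"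
      by (rule chord_word_count_cong[OF snoc.prems(2)]) simp
    then show ?thesis
      using snoc.prems(1) snoc.IH[of "v # B"] by simp
  qed
  ultimately show ?case
    using cas_span.add by fastforce
qed

lemma share_val_move_right_in_span:
  assumes "span_below sc C l r (length (p @ A @ M @ [u] @ B))" and "chord_word (p @ A @ M @ [u] @ B)"
  shows "share_val l r p (A @ M @ [u] @ B) - share_val l r p (A @ [u] @ M @ B)
      \<in> omega_span (length (p @ A @ M @ [u] @ B) div 2)"
proof -
  interpret swapped: sl2_pair sc C r l kr kl
    by (rule sl2_pair_swap) (rule sl2_pair_axioms)
  have "share_val r l (A @ M @ [u] @ B) p - share_val r l (A @ [u] @ M @ B) p
      \<in> swapped.omega_span (length (A @ M @ [u] @ B @ p) div 2)"
    using span_below_swap[OF assms(1)] chord_word_append_swap[OF assms(2)]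
    by (intro swapped.share_val_move_in_span) (simp_all add: ac_simps)
  then show ?thesis
    by (simp add: share_val_swap omega_swap ac_simps)
qed

text \<open>The first chord endpoint of strand 1 is either an arch, which is made isolated and
  contributes a factor \<open>C\<close>, or a bridge, which is moved to the start of strand 2 and
  contributes a factor \<open>omega l r\<close>; the moves cost only terms of lower degree.\<close>

lemma share_val_Cons_in_span:
  assumes span: "span_below sc C l r (length ((u # p) @ q))" and cw: "chord_word ((u # p) @ q)"
  shows "share_val l r (u # p) q \<in> omega_span (length ((u # p) @ q) div 2 + 1)"
proof (cases "u \<in> set p")
  case True
  then obtain A B where p: "p = A @ u # B" and "u \<notin> set A"
    by (meson split_list_first)
  with cw have u: "u \<notin> set (A @ B @ q)"
    unfolding chord_word_def by (auto simp: in_set_iff_count_list)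
  have "share_val l r (u # p) q - share_val l r (u # u # A @ B) q
      \<in> omega_span (length ((u # p) @ q) div 2)"
    using share_val_move_in_span[of "[u]" A u B q] span cw unfolding p by simp
  then have move: "share_val l r (u # p) q - share_val l r (u # u # A @ B) q
      \<in> omega_span (length ((u # p) @ q) div 2 + 1)"
    by (rule cas_span_mono) simp
  have arch: "share_val l r (u # u # A @ B) q = C * share_val l r (A @ B) q"
    using share_val_arch[of u "[]" "A @ B" q] u by simp
  have "share_val l r (A @ B) q \<in> omega_span (length ((A @ B) @ q) div 2 + 1)"
    using span cw u unfolding p
    by (intro span_belowD) (auto elim: span_below_mono intro: chord_word_count_cong)
  then have "C * share_val l r (A @ B) q \<in> omega_span (length ((u # p) @ q) div 2 + 1)"
    unfolding p by (intro cas_span.cas) (erule cas_span_mono, simp)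
  with move show ?thesis
    unfolding arch by (rule cas_span_diff_add)
next
  case False
  with cw have "u \<in> set q"
    unfolding chord_word_def by (auto simp: in_set_iff_count_list)
  then obtain A B where q: "q = A @ u # B" and "u \<notin> set A"
    by (meson split_list_first)
  with cw False have u: "u \<notin> set (p @ A @ B)"
    unfolding chord_word_def by (auto simp: in_set_iff_count_list)
  have "share_val l r (u # p) q - share_val l r (u # p) (u # A @ B)
      \<in> omega_span (length ((u # p) @ q) div 2)"
    using share_val_move_right_in_span[of "u # p" "[]" A u B] span cw unfolding q by simp
  then have move: "share_val l r (u # p) q - share_val l r (u # p) (u # A @ B)
      \<in> omega_span (length ((u # p) @ q) div 2 + 1)"
    by (rule cas_span_mono) simp
  have bridge: "share_val l r (u # p) (u # A @ B) = omega l r * share_val l r p (A @ B)"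
    using u by (intro share_val_bridge) auto
  have "share_val l r p (A @ B) \<in> omega_span (length (p @ A @ B) div 2 + 1)"
    using span cw u unfolding q
    by (intro span_belowD) (auto elim: span_below_mono intro: chord_word_count_cong)
  then have "omega l r * share_val l r p (A @ B) \<in> omega_span (length ((u # p) @ q) div 2 + 1)"
    unfolding q by (auto dest: omega_mult_in_span)
  with move show ?thesis
    unfolding bridge by (rule cas_span_diff_add)
qed

lemma span_below_all: "span_below sc C l r L"
proof (induction L)
  case 0
  then show ?case
    by (simp add: span_below_def)
next
  case (Suc L)
  interpret swapped: sl2_pair sc C r l kr kl
    by (rule sl2_pair_swap) (rule sl2_pair_axioms)
  have "share_val l r p q \<in> omega_span (length (p @ q) div 2 + 1)"
    if "length (p @ q) = L" "chord_word (p @ q)" for p q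
  proof (cases p)
    case (Cons u p')
    then show ?thesis
      using Suc that share_val_Cons_in_span by blast
  next
    case Nil
    show ?thesis
    proof (cases q)
      case Nil
      have "omega l r ^ 0 \<in> omega_span 1"
        by (rule cas_span.gen) simp
      with \<open>p = []\<close> Nil show ?thesis
        by simp
    next
      case (Cons u q')
      have "share_val r l (u # q') [] \<in> swapped.omega_span (length ((u # q') @ []) div 2 + 1)"
        using span_below_swap[OF Suc.IH] chord_word_append_swap[of p q] that \<open>p = []\<close> Cons
        by (intro swapped.share_val_Cons_in_span) simp_all
      with \<open>p = []\<close> Cons show ?thesis
        by (simp add: share_val_swap omega_swap)
    qed
  qed
  with Suc.IH show ?case
    unfolding span_below_def by (metis less_SucE)
qed

text \<open>When all chords are bridges, every bridge contributes \<open>omega l r\<close> to the top term.\<close>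

lemma share_val_monic:
  assumes "chord_word (p @ q)" "distinct p" "distinct q"
  shows "share_val l r p q - omega l r ^ (length (p @ q) div 2) \<in> omega_span (length (p @ q) div 2)"
  using assms
proof (induction p arbitrary: q)
  case Nil
  have "q = []"
  proof (rule ccontr)
    assume "q \<noteq> []"
    then have "count_list q (hd q) = 2"
      using Nil.prems(1) unfolding chord_word_def by simp
    moreover have "count_list q (hd q) \<le> 1"
      using Nil.prems(3) by (simp add: distinct_iff_count_list_le_1)
    ultimately show False
      by simp
  qed
  then show ?case
    by (simp add: cas_span.zero)
next
  case (Cons u p)
  then have "u \<in> set q"
    unfolding chord_word_def by (auto simp: in_set_iff_count_list)
  then obtain A B where q: "q = A @ u # B"
    by (meson split_list)
  with Cons.prems have u: "u \<notin> set (p @ A @ B)" and cw: "chord_word (p @ A @ B)"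
    and dist: "distinct p" "distinct (A @ B)"
    by (auto intro: chord_word_count_cong)
  have "share_val l r (u # p) ([] @ A @ [u] @ B) - share_val l r (u # p) ([] @ [u] @ A @ B)
      \<in> omega_span (length ((u # p) @ q) div 2)"
    using share_val_move_right_in_span[of "u # p" "[]" A u B] span_below_all Cons.prems(1)
    unfolding q by simp
  moreover have bridge: "share_val l r (u # p) (u # A @ B) = omega l r * share_val l r p (A @ B)"
    using u by (intro share_val_bridge) auto
  moreover have "omega l r * (share_val l r p (A @ B) - omega l r ^ (length (p @ A @ B) div 2))
      \<in> omega_span (Suc (length (p @ A @ B) div 2))"
    using Cons.IH[OF cw dist] by (rule omega_mult_in_span)
  ultimately have "(share_val l r (u # p) q - share_val l r (u # p) (u # A @ B))
      + omega l r * (share_val l r p (A @ B) - omega l r ^ (length (p @ A @ B) div 2))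
      \<in> omega_span (length ((u # p) @ q) div 2)"
    unfolding q by (intro cas_span.add) simp_all
  then show ?case
    unfolding q bridge by (simp add: right_diff_distrib algebra_simps)
qed

lemma omega_pow_in_span:
  assumes "\<And>j. G j - omega l r ^ j \<in> omega_span j"
  shows "omega l r ^ j \<in> cas_span sc C G (Suc j)"
proof (induction j rule: less_induct)
  case (less j)
  have "omega l r ^ i \<in> cas_span sc C G j" if "i < j" for i
    using less[OF that] by (rule cas_span_mono) (use that in simp)
  then have "G j - omega l r ^ j \<in> cas_span sc C G j"
    using assms by (rule cas_span_subset)
  then have "G j - omega l r ^ j \<in> cas_span sc C G (Suc j)"
    by (rule cas_span_mono) simp
  moreover have "G j \<in> cas_span sc C G (Suc j)"
    by (rule cas_span.gen) simp
  ultimately show ?case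
    using cas_span_diff[of "G j" G "Suc j" "G j - omega l r ^ j"] by simp
qed

lemma omega_span_subset:
  assumes "\<And>j. G j - omega l r ^ j \<in> omega_span j" and "x \<in> omega_span m"
  shows "x \<in> cas_span sc C G m"
proof (rule cas_span_subset [OF _ assms(2)])
  show "omega l r ^ j \<in> cas_span sc C G m" if "j < m" for j
    by (rule cas_span_mono[OF omega_pow_in_span[OF assms(1)]]) (use that in simp)
qed

definition cas_poly :: "complex poly \<Rightarrow> 'a" where
  "cas_poly f = (\<Sum>i\<le>degree f. sc (coeff f i) * C ^ i)"

lemma cas_poly_eq: "degree f \<le> N \<Longrightarrow> cas_poly f = (\<Sum>i\<le>N. sc (coeff f i) * C ^ i)"
  unfolding cas_poly_def by (rule sum.mono_neutral_left) (auto simp: coeff_eq_0)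

lemma cas_poly_add: "cas_poly (f + g) = cas_poly f + cas_poly g"
proof -
  let ?N = "max (degree f) (degree g)"
  have "cas_poly (f + g) = (\<Sum>i\<le>?N. sc (coeff (f + g) i) * C ^ i)"
    by (rule cas_poly_eq) (simp add: degree_add_le)
  also have "\<dots> = cas_poly f + cas_poly g"
    using cas_poly_eq[of f ?N] cas_poly_eq[of g ?N] by (simp add: sc_add distrib_right sum.distrib)
  finally show ?thesis .
qed

lemma cas_poly_smult: "cas_poly (smult z f) = sc z * cas_poly f"
  using cas_poly_eq[of "smult z f" "degree f"]
  by (simp add: cas_poly_def degree_smult_le sum_distrib_left sc_mult mult.assoc)

lemma cas_poly_monom_mult: "cas_poly (pCons 0 f) = C * cas_poly f"
proof -
  have "cas_poly (pCons 0 f) = (\<Sum>i\<le>degree f. sc (coeff f i) * C ^ Suc i)"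
    using cas_poly_eq[of "pCons 0 f" "Suc (degree f)"]
    by (simp add: degree_pCons_le sum.atMost_Suc_shift del: sum.atMost_Suc)
  also have "\<dots> = C * cas_poly f"
    unfolding cas_poly_def sum_distrib_left
    by (intro sum.cong refl) (simp add: sc_left_commute mult.assoc flip: sc_commute)
  finally show ?thesis .
qed

lemma cas_span_sum_repr: "x \<in> cas_span sc C G m \<Longrightarrow> \<exists>b. x = (\<Sum>k<m. cas_poly (b k) * G k)"
proof (induction rule: cas_span.induct)
  case zero
  show ?case
    by (rule exI[of _ "\<lambda>_. 0"]) (simp add: cas_poly_def)
next
  case (add x y)
  then obtain b b' where "x = (\<Sum>k<m. cas_poly (b k) * G k)" "y = (\<Sum>k<m. cas_poly (b' k) * G k)"
    by blast
  then show ?case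
    by (intro exI[of _ "\<lambda>k. b k + b' k"]) (simp add: cas_poly_add distrib_right sum.distrib)
next
  case (scale x z)
  then obtain b where "x = (\<Sum>k<m. cas_poly (b k) * G k)"
    by blast
  then show ?case
    by (intro exI[of _ "\<lambda>k. smult z (b k)"]) (simp add: cas_poly_smult sum_distrib_left mult.assoc)
next
  case (cas x)
  then obtain b where "x = (\<Sum>k<m. cas_poly (b k) * G k)"
    by blast
  then show ?case
    by (intro exI[of _ "\<lambda>k. pCons 0 (b k)"]) (simp add: cas_poly_monom_mult sum_distrib_left mult.assoc)
next
  case (gen j)
  have "(\<Sum>k<m. cas_poly (if k = j then 1 else 0) * G k) = (\<Sum>k<m. if k = j then G k else 0)"
    by (intro sum.cong refl) (simp add: cas_poly_def)
  with gen show ?case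
    by (intro exI[of _ "\<lambda>k. if k = j then 1 else 0"]) simp
qed

text \<open>Since every \<open>G k\<close> agrees with \<open>omega l r ^ k\<close> up to lower powers, the \<open>G k\<close> form a
  triangular basis of the span of the powers of \<open>omega l r\<close>.\<close>

lemma share_val_monic_expansion:
  assumes "chord_word (p @ q)" "distinct p" "distinct q" "length (p @ q) div 2 = m"
    and G: "\<And>k. G k - omega l r ^ k \<in> omega_span k"
  shows "\<exists>b. share_val l r p q = G m + (\<Sum>k<m. cas_poly (b k) * G k)"
proof -
  have "share_val l r p q - omega l r ^ m \<in> omega_span m"
    using share_val_monic[OF assms(1-3)] assms(4) by simp
  from cas_span_diff[OF this G[of m]] have "share_val l r p q - G m \<in> omega_span m"
    by (simp add: algebra_simps)
  then have "share_val l r p q - G m \<in> cas_span sc C G m"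
    by (rule omega_span_subset[OF G])
  then obtain b where "share_val l r p q - G m = (\<Sum>k<m. cas_poly (b k) * G k)"
    using cas_span_sum_repr by blast
  then show ?thesis
    by (metis add.commute diff_add_cancel)
qed

end

section \<open>Operators on families of matrices\<close>

text \<open>Linear operators on families of square matrices, the \<open>n\<close>-th one acting on \<open>V\<^sub>n\<close>.  Left
  multiplications (strand 1) commute with right multiplications (strand 2), so this ring carries
  two commuting copies of \<open>U(sl\<^sub>2)\<close>; treating all \<open>n\<close> at once makes the coefficients produced
  by the abstract argument independent of \<open>n\<close>.\<close>

type_synonym mfam = "nat \<Rightarrow> nat \<Rightarrow> nat \<Rightarrow> complex"

definition mfam_add :: "mfam \<Rightarrow> mfam \<Rightarrow> mfam" where
  "mfam_add X Y = (\<lambda>n i j. X n i j + Y n i j)"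

definition mfam_scale :: "complex \<Rightarrow> mfam \<Rightarrow> mfam" where
  "mfam_scale z X = (\<lambda>n i j. z * X n i j)"

definition mfam_linear :: "(mfam \<Rightarrow> mfam) \<Rightarrow> bool" where
  "mfam_linear f \<longleftrightarrow> (\<forall>X Y. f (mfam_add X Y) = mfam_add (f X) (f Y))
     \<and> (\<forall>z X. f (mfam_scale z X) = mfam_scale z (f X))"

typedef mfam_op = "{f :: mfam \<Rightarrow> mfam. mfam_linear f}" morphisms app Abs_mfam_op
  by (rule exI[of _ id]) (simp add: mfam_linear_def)

lemma mfam_linear_app: "mfam_linear (app f)"
  using app by simp

lemma app_Abs_mfam_op: "mfam_linear F \<Longrightarrow> app (Abs_mfam_op F) = F"
  by (simp add: Abs_mfam_op_inverse)

lemma mfam_op_eqI: "(\<And>X. app f X = app g X) \<Longrightarrow> f = g"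
  by (metis app_inject ext)

lemma app_mfam_add: "app f (mfam_add X Y) = mfam_add (app f X) (app f Y)"
  using mfam_linear_app[of f] by (simp add: mfam_linear_def)

lemma app_mfam_scale: "app f (mfam_scale z X) = mfam_scale z (app f X)"
  using mfam_linear_app[of f] by (simp add: mfam_linear_def)

lemma mfam_linear_zero: "mfam_linear (\<lambda>X n i j. 0)"
  by (simp add: mfam_linear_def mfam_add_def mfam_scale_def)

lemma mfam_linear_id: "mfam_linear id"
  by (simp add: mfam_linear_def)

lemma mfam_linear_add: "mfam_linear (\<lambda>X. mfam_add (app f X) (app g X))"
  by (simp add: mfam_linear_def app_mfam_add app_mfam_scale)
    (simp add: mfam_add_def mfam_scale_def fun_eq_iff algebra_simps)

lemma mfam_linear_uminus: "mfam_linear (\<lambda>X n i j. - app f X n i j)"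
  by (simp add: mfam_linear_def app_mfam_add app_mfam_scale)
    (simp add: mfam_add_def mfam_scale_def fun_eq_iff algebra_simps)

lemma mfam_linear_diff: "mfam_linear (\<lambda>X n i j. app f X n i j - app g X n i j)"
  by (simp add: mfam_linear_def app_mfam_add app_mfam_scale)
    (simp add: mfam_add_def mfam_scale_def fun_eq_iff algebra_simps)

lemma mfam_linear_comp: "mfam_linear (\<lambda>X. app f (app g X))"
  by (simp add: mfam_linear_def app_mfam_add app_mfam_scale)

instantiation mfam_op :: ring_1
begin

definition "0 = Abs_mfam_op (\<lambda>X n i j. 0)"
definition "1 = Abs_mfam_op id"
definition "f + g = Abs_mfam_op (\<lambda>X. mfam_add (app f X) (app g X))"
definition "- f = Abs_mfam_op (\<lambda>X n i j. - app f X n i j)"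
definition "f - g = Abs_mfam_op (\<lambda>X n i j. app f X n i j - app g X n i j)"
definition "f * g = Abs_mfam_op (\<lambda>X. app f (app g X))"

lemma app_zero [simp]: "app 0 X = (\<lambda>n i j. 0)"
  by (simp add: zero_mfam_op_def app_Abs_mfam_op mfam_linear_zero)

lemma app_one [simp]: "app 1 X = X"
  by (simp add: one_mfam_op_def app_Abs_mfam_op mfam_linear_id)

lemma app_plus [simp]: "app (f + g) X = mfam_add (app f X) (app g X)"
  by (simp add: plus_mfam_op_def app_Abs_mfam_op mfam_linear_add)

lemma app_uminus [simp]: "app (- f) X = (\<lambda>n i j. - app f X n i j)"
  by (simp add: uminus_mfam_op_def app_Abs_mfam_op mfam_linear_uminus)

lemma app_minus [simp]: "app (f - g) X = (\<lambda>n i j. app f X n i j - app g X n i j)"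
  by (simp add: minus_mfam_op_def app_Abs_mfam_op mfam_linear_diff)

lemma app_times [simp]: "app (f * g) X = app f (app g X)"
  by (simp add: times_mfam_op_def app_Abs_mfam_op mfam_linear_comp)

instance
proof
  fix a b c :: mfam_op
  show "a * b * c = a * (b * c)" "1 * a = a" "a * 1 = a" "(a + b) * c = a * c + b * c"
    by (rule mfam_op_eqI, simp)+
  show "a + b + c = a + (b + c)" "a + b = b + a" "0 + a = a" "- a + a = 0" "a - b = a + - b"
    by (rule mfam_op_eqI, simp add: mfam_add_def algebra_simps)+
  show "a * (b + c) = a * b + a * c"
    by (rule mfam_op_eqI) (simp add: app_mfam_add)
  show "(0::mfam_op) \<noteq> 1"
  proof
    assume "(0::mfam_op) = 1"
    then have "app 0 (\<lambda>n i j. 1) = app 1 (\<lambda>n i j. 1)"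
      by simp
    then show False
      by (simp add: fun_eq_iff)
  qed
qed

end

lemma app_sum: "app (sum f I) X = (\<lambda>n i j. \<Sum>x\<in>I. app (f x) X n i j)"
  by (induction I rule: infinite_finite_induct) (auto simp: mfam_add_def)

definition scalar_op :: "complex \<Rightarrow> mfam_op" where
  "scalar_op z = Abs_mfam_op (mfam_scale z)"

lemma app_scalar_op [simp]: "app (scalar_op z) X = mfam_scale z X"
proof -
  have "mfam_linear (mfam_scale z)"
    by (simp add: mfam_linear_def mfam_scale_def mfam_add_def fun_eq_iff algebra_simps)
  then show ?thesis
    by (simp add: scalar_op_def app_Abs_mfam_op)
qed

definition mfam_mult :: "mfam \<Rightarrow> mfam \<Rightarrow> mfam" where
  "mfam_mult M N = (\<lambda>n i j. \<Sum>k\<le>n. M n i k * N n k j)"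

definition lmult_fun :: "mfam \<Rightarrow> mfam \<Rightarrow> mfam" where
  "lmult_fun M Y = (\<lambda>n i j. if i \<le> n \<and> j \<le> n then \<Sum>k\<le>n. M n i k * Y n k j else 0)"

definition rmult_fun :: "mfam \<Rightarrow> mfam \<Rightarrow> mfam" where
  "rmult_fun M Y = (\<lambda>n i j. if i \<le> n \<and> j \<le> n then \<Sum>k\<le>n. Y n i k * M n k j else 0)"

definition lmult :: "mfam \<Rightarrow> mfam_op" where
  "lmult M = Abs_mfam_op (lmult_fun M)"

definition rmult :: "mfam \<Rightarrow> mfam_op" where
  "rmult M = Abs_mfam_op (rmult_fun M)"

lemma app_lmult: "app (lmult M) Y = lmult_fun M Y"
proof -
  have "mfam_linear (lmult_fun M)"
    by (simp add: mfam_linear_def lmult_fun_def mfam_add_def mfam_scale_def fun_eq_iff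
        algebra_simps sum.distrib sum_distrib_left)
  then show ?thesis
    by (simp add: lmult_def app_Abs_mfam_op)
qed

lemma app_rmult: "app (rmult M) Y = rmult_fun M Y"
proof -
  have "mfam_linear (rmult_fun M)"
    by (simp add: mfam_linear_def rmult_fun_def mfam_add_def mfam_scale_def fun_eq_iff
        algebra_simps sum.distrib sum_distrib_left)
  then show ?thesis
    by (simp add: rmult_def app_Abs_mfam_op)
qed

lemma lmult_mult: "lmult M * lmult N = lmult (mfam_mult M N)"
  by (rule mfam_op_eqI)
    (auto simp: app_lmult lmult_fun_def mfam_mult_def fun_eq_iff sum_distrib_left sum_distrib_right
      mult.assoc intro: sum.swap)

lemma rmult_mult: "rmult M * rmult N = rmult (mfam_mult N M)"
  by (rule mfam_op_eqI)
    (auto simp: app_rmult rmult_fun_def mfam_mult_def fun_eq_iff sum_distrib_left sum_distrib_right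
      mult.assoc intro: sum.swap)

lemma lmult_rmult_commute: "lmult M * rmult N = rmult N * lmult M"
  by (rule mfam_op_eqI)
    (auto simp: app_lmult app_rmult lmult_fun_def rmult_fun_def fun_eq_iff sum_distrib_left
      sum_distrib_right mult.assoc intro: sum.swap)

lemma lmult_cong: "(\<And>n i j. i \<le> n \<Longrightarrow> j \<le> n \<Longrightarrow> M n i j = N n i j) \<Longrightarrow> lmult M = lmult N"
  unfolding lmult_def lmult_fun_def by (rule arg_cong[where f = Abs_mfam_op]) (auto simp: fun_eq_iff)

lemma rmult_cong: "(\<And>n i j. i \<le> n \<Longrightarrow> j \<le> n \<Longrightarrow> M n i j = N n i j) \<Longrightarrow> rmult M = rmult N"
  unfolding rmult_def rmult_fun_def by (rule arg_cong[where f = Abs_mfam_op]) (auto simp: fun_eq_iff)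

lemma lmult_add: "lmult M + lmult N = lmult (\<lambda>n i j. M n i j + N n i j)"
  by (rule mfam_op_eqI) (simp add: app_lmult lmult_fun_def mfam_add_def fun_eq_iff algebra_simps sum.distrib)

lemma rmult_add: "rmult M + rmult N = rmult (\<lambda>n i j. M n i j + N n i j)"
  by (rule mfam_op_eqI) (simp add: app_rmult rmult_fun_def mfam_add_def fun_eq_iff algebra_simps sum.distrib)

lemma scalar_op_lmult: "scalar_op z * lmult M = lmult (\<lambda>n i j. z * M n i j)"
  by (rule mfam_op_eqI) (simp add: app_lmult lmult_fun_def mfam_scale_def fun_eq_iff sum_distrib_left mult.assoc)

lemma scalar_op_rmult: "scalar_op z * rmult M = rmult (\<lambda>n i j. z * M n i j)"
  by (rule mfam_op_eqI) (simp add: app_rmult rmult_fun_def mfam_scale_def fun_eq_iff algebra_simps sum_distrib_left)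

lemma lmult_sum: "(\<Sum>c\<in>I. lmult (M c)) = lmult (\<lambda>n i j. \<Sum>c\<in>I. M c n i j)"
proof (induction I rule: infinite_finite_induct)
  case (empty)
  show ?case
    by (rule mfam_op_eqI) (simp add: app_lmult lmult_fun_def fun_eq_iff)
qed (simp_all add: lmult_add, rule mfam_op_eqI, simp add: app_lmult lmult_fun_def fun_eq_iff)

lemma rmult_sum: "(\<Sum>c\<in>I. rmult (M c)) = rmult (\<lambda>n i j. \<Sum>c\<in>I. M c n i j)"
proof (induction I rule: infinite_finite_induct)
  case (empty)
  show ?case
    by (rule mfam_op_eqI) (simp add: app_rmult rmult_fun_def fun_eq_iff)
qed (simp_all add: rmult_add, rule mfam_op_eqI, simp add: app_rmult rmult_fun_def fun_eq_iff)

lemma sum_atMost_single: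
  fixes F :: "nat \<Rightarrow> complex"
  assumes "\<And>k. k \<le> n \<Longrightarrow> k \<noteq> c \<Longrightarrow> F k = 0"
  shows "(\<Sum>k\<le>n. F k) = (if c \<le> n then F c else 0)"
  using assms by (auto intro: sum.neutral simp: sum.remove[of "{..n}" c])

lemma e_mult_f:
  "(\<Sum>k\<le>n. e_mat n i k * f_mat n k m) = (if i = m then of_nat (Suc i * (n - i)) else 0)"
proof (cases "i < n")
  case True
  then show ?thesis
    by (subst sum_atMost_single[where c = "Suc i"]) (auto simp: e_mat_def f_mat_def)
next
  case False
  then show ?thesis
    by (auto simp: e_mat_def intro!: sum.neutral)
qed

lemma f_mult_e:
  "i \<le> n \<Longrightarrow> m \<le> n \<Longrightarrow>
    (\<Sum>k\<le>n. f_mat n i k * e_mat n k m) = (if i = m then of_nat (i * (Suc n - i)) else 0)"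
  by (cases i) (simp add: f_mat_def, subst sum_atMost_single[where c = "i - 1"], auto simp: e_mat_def f_mat_def)

lemma e_mult_h:
  "i \<le> n \<Longrightarrow> m \<le> n \<Longrightarrow>
    (\<Sum>k\<le>n. e_mat n i k * h_mat n k m) = e_mat n i m * of_int (int n - 2 * int m)"
  by (subst sum_atMost_single[where c = m]) (auto simp: e_mat_def h_mat_def)

lemma h_mult_e:
  "i \<le> n \<Longrightarrow> m \<le> n \<Longrightarrow>
    (\<Sum>k\<le>n. h_mat n i k * e_mat n k m) = of_int (int n - 2 * int i) * e_mat n i m"
  by (subst sum_atMost_single[where c = i]) (auto simp: e_mat_def h_mat_def)

lemma f_mult_h:
  "i \<le> n \<Longrightarrow> m \<le> n \<Longrightarrow>
    (\<Sum>k\<le>n. f_mat n i k * h_mat n k m) = f_mat n i m * of_int (int n - 2 * int m)"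
  by (subst sum_atMost_single[where c = m]) (auto simp: f_mat_def h_mat_def)

lemma h_mult_f:
  "i \<le> n \<Longrightarrow> m \<le> n \<Longrightarrow>
    (\<Sum>k\<le>n. h_mat n i k * f_mat n k m) = of_int (int n - 2 * int i) * f_mat n i m"
  by (subst sum_atMost_single[where c = i]) (auto simp: f_mat_def h_mat_def)

lemma h_mult_h:
  "i \<le> n \<Longrightarrow> m \<le> n \<Longrightarrow>
    (\<Sum>k\<le>n. h_mat n i k * h_mat n k m) = (if i = m then (of_int (int n - 2 * int i))\<^sup>2 else 0)"
  by (subst sum_atMost_single[where c = i]) (auto simp: h_mat_def power2_eq_square)

lemma e_f_commutator:
  assumes "i \<le> n" "m \<le> n"
  shows "(\<Sum>k\<le>n. e_mat n i k * f_mat n k m) = (\<Sum>k\<le>n. f_mat n i k * e_mat n k m) + h_mat n i m"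
proof -
  obtain d where "n = i + d"
    using le_Suc_ex[OF assms(1)] by blast
  then have "(of_nat (Suc i * (n - i)) :: complex) = of_nat (i * (Suc n - i)) + of_int (int n - 2 * int i)"
    by (simp add: algebra_simps)
  with assms show ?thesis
    by (auto simp: e_mult_f f_mult_e h_mat_def)
qed

lemma e_h_commutator:
  "i \<le> n \<Longrightarrow> m \<le> n \<Longrightarrow>
    (\<Sum>k\<le>n. e_mat n i k * h_mat n k m) = (\<Sum>k\<le>n. h_mat n i k * e_mat n k m) - 2 * e_mat n i m"
  by (simp add: e_mult_h h_mult_e) (auto simp: e_mat_def algebra_simps)

lemma f_h_commutator:
  "i \<le> n \<Longrightarrow> m \<le> n \<Longrightarrow>
    (\<Sum>k\<le>n. f_mat n i k * h_mat n k m) = (\<Sum>k\<le>n. h_mat n i k * f_mat n k m) + 2 * f_mat n i m"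
  by (simp add: f_mult_h h_mult_f) (auto simp: f_mat_def algebra_simps)

definition e_coeff :: "nat \<Rightarrow> complex" where
  "e_coeff a = (if a = 0 then 1/2 else if a = 1 then - \<i>/2 else 0)"

definition f_coeff :: "nat \<Rightarrow> complex" where
  "f_coeff a = (if a = 0 then 1/2 else if a = 1 then \<i>/2 else 0)"

definition h_coeff :: "nat \<Rightarrow> complex" where
  "h_coeff a = (if a = 0 then 0 else if a = 1 then 0 else 1/2)"

lemma rho_eq_efh:
  "rho n a i j = e_coeff a * e_mat n i j + f_coeff a * f_mat n i j + h_coeff a * h_mat n i j"
  unfolding rho_def e_coeff_def f_coeff_def h_coeff_def by (auto simp: field_simps)

lemma sum_mult_efh:
  "(\<Sum>k\<le>n. (a1 * E i k + b1 * F i k + c1 * H i k) * (a2 * E k m + b2 * F k m + c2 * H k m)) =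
    a1*a2*(\<Sum>k\<le>n. E i k * E k m) + a1*b2*(\<Sum>k\<le>n. E i k * F k m) + a1*c2*(\<Sum>k\<le>n. E i k * H k m)
  + b1*a2*(\<Sum>k\<le>n. F i k * E k m) + b1*b2*(\<Sum>k\<le>n. F i k * F k m) + b1*c2*(\<Sum>k\<le>n. F i k * H k m)
  + c1*a2*(\<Sum>k\<le>n. H i k * E k m) + c1*b2*(\<Sum>k\<le>n. H i k * F k m) + c1*c2*(\<Sum>k\<le>n. H i k * H k m)"
  for E F H :: "nat \<Rightarrow> nat \<Rightarrow> complex"
  by (simp add: algebra_simps sum.distrib sum_distrib_left)

lemma rho_commutator:
  assumes "a < 3" "b < 3" "i \<le> n" "m \<le> n"
  shows "(\<Sum>k\<le>n. rho n a i k * rho n b k m) = (\<Sum>k\<le>n. rho n b i k * rho n a k m)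
          + \<i> * (\<Sum>c<3. levi_civita a b c * rho n c i m)"
proof -
  note cs = e_f_commutator[OF assms(3,4)] e_h_commutator[OF assms(3,4)] f_h_commutator[OF assms(3,4)]
  show ?thesis
    unfolding rho_eq_efh sum_mult_efh cs sum_lessThan_3
    using less_3_cases[OF assms(1)] less_3_cases[OF assms(2)]
    by (elim disjE) (simp_all add: e_coeff_def f_coeff_def h_coeff_def levi_civita_def algebra_simps)
qed

definition casimir_eigval :: "nat \<Rightarrow> complex" where
  "casimir_eigval n = of_nat (n * (n + 2)) / 4"

lemma rho_casimir:
  assumes "i \<le> n" "m \<le> n"
  shows "(\<Sum>a<3. \<Sum>k\<le>n. rho n a i k * rho n a k m) = (if i = m then casimir_eigval n else 0)"
proof -
  have "(\<Sum>a<3. \<Sum>k\<le>n. rho n a i k * rho n a k m) =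
     ((\<Sum>k\<le>n. e_mat n i k * f_mat n k m) + (\<Sum>k\<le>n. f_mat n i k * e_mat n k m)) / 2
     + (\<Sum>k\<le>n. h_mat n i k * h_mat n k m) / 4"
    unfolding sum_lessThan_3 rho_eq_efh sum_mult_efh
    by (simp add: e_coeff_def f_coeff_def h_coeff_def algebra_simps)
  also have "\<dots> = (if i = m then casimir_eigval n else 0)"
  proof -
    obtain d where "n = i + d"
      using le_Suc_ex[OF assms(1)] by blast
    then have "(of_nat (Suc i * (n - i)) + of_nat (i * (Suc n - i))) / 2 + (of_int (int n - 2 * int i))\<^sup>2 / 4
        = (casimir_eigval n :: complex)"
      by (simp add: casimir_eigval_def field_simps power2_eq_square)
    with assms show ?thesis
      by (auto simp: e_mult_f f_mult_e h_mult_h)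
  qed
  finally show ?thesis .
qed

definition casimir_diag :: mfam where
  "casimir_diag = (\<lambda>n i j. if i = j then casimir_eigval n else 0)"

definition casimir_op :: mfam_op where
  "casimir_op = lmult casimir_diag"

definition rho_left :: "nat \<Rightarrow> mfam_op" where
  "rho_left a = lmult (\<lambda>n i j. rho n a i j)"

definition rho_right :: "nat \<Rightarrow> mfam_op" where
  "rho_right a = rmult (\<lambda>n i j. rho n a i j)"

lemma rmult_casimir_diag: "rmult casimir_diag = lmult casimir_diag"
proof (rule mfam_op_eqI)
  fix Y
  show "app (rmult casimir_diag) Y = app (lmult casimir_diag) Y"
    unfolding app_lmult app_rmult lmult_fun_def rmult_fun_def casimir_diag_def fun_eq_iff
  proof (intro allI)
    fix n i j
    show "(if i \<le> n \<and> j \<le> n then \<Sum>k\<le>n. Y n i k * (if k = j then casimir_eigval n else 0) else 0) =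
          (if i \<le> n \<and> j \<le> n then \<Sum>k\<le>n. (if i = k then casimir_eigval n else 0) * Y n k j else 0)"
      by (auto simp: sum_atMost_single[where c = j] sum_atMost_single[where c = i])
  qed
qed

lemma casimir_diag_mult:
  "i \<le> n \<Longrightarrow> j \<le> n \<Longrightarrow>
    (\<Sum>k\<le>n. casimir_diag n i k * M n k j) = casimir_eigval n * M n i j"
  by (subst sum_atMost_single[where c = i]) (auto simp: casimir_diag_def)

lemma mult_casimir_diag:
  "i \<le> n \<Longrightarrow> j \<le> n \<Longrightarrow>
    (\<Sum>k\<le>n. M n i k * casimir_diag n k j) = M n i j * casimir_eigval n"
  by (subst sum_atMost_single[where c = j]) (auto simp: casimir_diag_def)

lemma rho_left_commutator:
  assumes "a < 3" "b < 3"
  shows "rho_left a * rho_left b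
    = rho_left b * rho_left a + scalar_op \<i> * (\<Sum>c<3. scalar_op (levi_civita a b c) * rho_left c)"
  unfolding rho_left_def lmult_mult scalar_op_lmult lmult_sum lmult_add
  by (rule lmult_cong) (simp add: mfam_mult_def rho_commutator[OF assms])

lemma rho_right_commutator:
  assumes "a < 3" "b < 3"
  shows "rho_right a * rho_right b
    = rho_right b * rho_right a + scalar_op (- \<i>) * (\<Sum>c<3. scalar_op (levi_civita a b c) * rho_right c)"
  unfolding rho_right_def rmult_mult scalar_op_rmult rmult_sum rmult_add
  by (rule rmult_cong) (simp add: mfam_mult_def rho_commutator[OF assms] algebra_simps)

lemma rho_left_casimir: "(\<Sum>a<3. rho_left a * rho_left a) = casimir_op"
  unfolding rho_left_def casimir_op_def lmult_mult lmult_sum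
  by (rule lmult_cong) (simp add: mfam_mult_def casimir_diag_def rho_casimir)

lemma rho_right_casimir: "(\<Sum>a<3. rho_right a * rho_right a) = casimir_op"
  unfolding rho_right_def casimir_op_def rmult_mult rmult_sum rmult_casimir_diag [symmetric]
  by (rule rmult_cong) (simp add: mfam_mult_def casimir_diag_def rho_casimir)

lemma casimir_op_rho_left_commute: "casimir_op * rho_left a = rho_left a * casimir_op"
  unfolding rho_left_def casimir_op_def lmult_mult
proof (rule lmult_cong)
  fix n i j :: nat
  assume "i \<le> n" "j \<le> n"
  then show "mfam_mult casimir_diag (\<lambda>n. rho n a) n i j = mfam_mult (\<lambda>n. rho n a) casimir_diag n i j"
    using casimir_diag_mult[of i n j "\<lambda>n. rho n a"] mult_casimir_diag[of i n j "\<lambda>n. rho n a"]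
    by (simp add: mfam_mult_def mult.commute)
qed

interpretation rep: sl2_pair scalar_op casimir_op rho_left rho_right \<i> "- \<i>"
proof
  fix x y z :: complex and w :: mfam_op and a b :: nat
  show "scalar_op (x + y) = scalar_op x + scalar_op y" "scalar_op (x * y) = scalar_op x * scalar_op y"
    "scalar_op 1 = 1"
    by (rule mfam_op_eqI, simp add: mfam_scale_def mfam_add_def fun_eq_iff algebra_simps)+
  show "scalar_op z * w = w * scalar_op z"
    by (rule mfam_op_eqI) (simp add: app_mfam_scale)
  show "rho_left a * rho_right b = rho_right b * rho_left a" "casimir_op * rho_right a = rho_right a * casimir_op"
    by (simp_all add: rho_left_def rho_right_def casimir_op_def lmult_rmult_commute)
qed (rule rho_left_commutator rho_right_commutator rho_left_casimir rho_right_casimir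
    casimir_op_rho_left_commute; assumption)+

section \<open>Evaluating joins\<close>

lemma matprod_append:
  "i \<le> n \<Longrightarrow> matprod n (xs @ ys) i j = (\<Sum>k\<le>n. matprod n xs i k * matprod n ys k j)"
proof (induction xs arbitrary: i)
  case Nil
  show ?case
    by (subst sum_atMost_single[where c = i]) (use Nil in auto)
next
  case (Cons A xs)
  have "matprod n ((A # xs) @ ys) i j = (\<Sum>k\<le>n. A i k * (\<Sum>m\<le>n. matprod n xs k m * matprod n ys m j))"
    by (simp add: Cons.IH)
  also have "\<dots> = (\<Sum>m\<le>n. (\<Sum>k\<le>n. A i k * matprod n xs k m) * matprod n ys m j)"
    by (simp add: sum_distrib_left sum_distrib_right mult.assoc) (rule sum.swap)
  finally show ?case
    by simp
qed

abbreviation word_mat :: "nat \<Rightarrow> (nat \<Rightarrow> nat) \<Rightarrow> nat list \<Rightarrow> nat \<Rightarrow> nat \<Rightarrow> complex" where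
  "word_mat n \<phi> w \<equiv> matprod n (map (\<lambda>x. rho n (\<phi> x)) w)"

lemma app_wprod_rho_left:
  "i \<le> n \<Longrightarrow> t \<le> n \<Longrightarrow> app (wprod rho_left \<phi> w) Y n i t = (\<Sum>k\<le>n. word_mat n \<phi> w i k * Y n k t)"
proof (induction w arbitrary: i)
  case Nil
  then show ?case
    by (simp, subst sum_atMost_single[where c = i]) auto
next
  case (Cons x w)
  have "app (wprod rho_left \<phi> (x # w)) Y n i t = (\<Sum>k\<le>n. rho n (\<phi> x) i k * app (wprod rho_left \<phi> w) Y n k t)"
    using Cons.prems by (simp add: rho_left_def app_lmult lmult_fun_def)
  also have "\<dots> = (\<Sum>k\<le>n. rho n (\<phi> x) i k * (\<Sum>m\<le>n. word_mat n \<phi> w k m * Y n m t))"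
    using Cons by (intro sum.cong refl) simp
  also have "\<dots> = (\<Sum>m\<le>n. (\<Sum>k\<le>n. rho n (\<phi> x) i k * word_mat n \<phi> w k m) * Y n m t)"
    by (simp add: sum_distrib_left sum_distrib_right mult.assoc) (rule sum.swap)
  finally show ?case
    by simp
qed

lemma app_wprod_rho_right:
  "i \<le> n \<Longrightarrow> t \<le> n \<Longrightarrow> app (wprod rho_right \<phi> w) Y n i t = (\<Sum>k\<le>n. Y n i k * word_mat n \<phi> (rev w) k t)"
proof (induction w arbitrary: t)
  case Nil
  then show ?case
    by (simp, subst sum_atMost_single[where c = t]) auto
next
  case (Cons x w)
  have "app (wprod rho_right \<phi> (x # w)) Y n i t = (\<Sum>k\<le>n. app (wprod rho_right \<phi> w) Y n i k * rho n (\<phi> x) k t)"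
    using Cons.prems by (simp add: rho_right_def app_rmult rmult_fun_def)
  also have "\<dots> = (\<Sum>k\<le>n. (\<Sum>m\<le>n. Y n i m * word_mat n \<phi> (rev w) m k) * rho n (\<phi> x) k t)"
    using Cons by (intro sum.cong refl) simp
  also have "\<dots> = (\<Sum>m\<le>n. Y n i m * (\<Sum>k\<le>n. word_mat n \<phi> (rev w) m k * rho n (\<phi> x) k t))"
    by (simp add: sum_distrib_left sum_distrib_right mult.assoc) (rule sum.swap)
  also have "\<dots> = (\<Sum>m\<le>n. Y n i m * word_mat n \<phi> (rev (x # w)) m t)"
  proof (intro sum.cong refl arg_cong[where f = "(*) _"])
    fix m assume "m \<in> {..n}"
    then have "word_mat n \<phi> (rev w @ [x]) m t = (\<Sum>k\<le>n. word_mat n \<phi> (rev w) m k * word_mat n \<phi> [x] k t)"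
      using matprod_append[of m n "map (\<lambda>x. rho n (\<phi> x)) (rev w)"] by simp
    also have "\<dots> = (\<Sum>k\<le>n. word_mat n \<phi> (rev w) m k * rho n (\<phi> x) k t)"
      using Cons.prems by (intro sum.cong refl) (simp, subst sum_atMost_single[where c = t], auto)
    finally show "(\<Sum>k\<le>n. word_mat n \<phi> (rev w) m k * rho n (\<phi> x) k t) = word_mat n \<phi> (rev (x # w)) m t"
      by simp
  qed
  finally show ?case .
qed

lemma app_share_val:
  assumes "i \<le> n" "t \<le> n"
  shows "app (share_val rho_left rho_right p (rev q)) Y n i t
    = (\<Sum>\<phi> \<in> set (p @ q) \<rightarrow>\<^sub>E {..<3}. \<Sum>k\<le>n. \<Sum>m\<le>n. word_mat n \<phi> p i k * (Y n k m * word_mat n \<phi> q m t))"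
proof -
  have "set (p @ rev q) = set (p @ q)"
    by auto
  moreover have "app (wprod rho_left \<phi> p * wprod rho_right \<phi> (rev q)) Y n i t
      = (\<Sum>k\<le>n. \<Sum>m\<le>n. word_mat n \<phi> p i k * (Y n k m * word_mat n \<phi> q m t))" for \<phi>
  proof -
    have "app (wprod rho_left \<phi> p * wprod rho_right \<phi> (rev q)) Y n i t
        = (\<Sum>k\<le>n. word_mat n \<phi> p i k * app (wprod rho_right \<phi> (rev q)) Y n k t)"
      using assms by (simp add: app_wprod_rho_left)
    also have "\<dots> = (\<Sum>k\<le>n. \<Sum>m\<le>n. word_mat n \<phi> p i k * (Y n k m * word_mat n \<phi> q m t))"
      using assms by (intro sum.cong refl) (simp add: app_wprod_rho_right sum_distrib_left)
    finally show ?thesis .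
  qed
  ultimately show ?thesis
    unfolding share_val_def app_sum by simp
qed

text \<open>The \<open>(i, j)\<close> entry, in \<open>V\<^sub>n\<close>, of the value of the join of an element \<open>Z\<close> with the
  share \<open>(h1, h2)\<close>: strand 1 of the share is inserted between the two strands of \<open>Z\<close>, and
  strand 2 of the share is multiplied on the right.\<close>

definition join_val :: "nat \<Rightarrow> nat list \<Rightarrow> nat list \<Rightarrow> nat \<Rightarrow> nat \<Rightarrow> mfam_op \<Rightarrow> complex" where
  "join_val n h1 h2 i j Z = (\<Sum>\<chi> \<in> set (h1 @ h2) \<rightarrow>\<^sub>E {..<3}. \<Sum>t\<le>n.
      app Z (\<lambda>n'. word_mat n' \<chi> h1) n i t * word_mat n \<chi> h2 t j)"

lemma wrep_join_eq_join_val: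
  assumes ij: "i \<le> n" "j \<le> n"
  shows "wrep n (join (p, q) (h1, h2)) i j = join_val n h1 h2 i j (share_val rho_left rho_right p (rev q))"
proof -
  let ?D = "set (p @ q) \<rightarrow>\<^sub>E {..<3}" and ?E = "set (h1 @ h2) \<rightarrow>\<^sub>E {..<3}"
  let ?X = "\<lambda>\<phi> \<chi> t. (\<Sum>k\<le>n. \<Sum>m\<le>n. word_mat n \<phi> p i k * (word_mat n \<chi> h1 k m * word_mat n \<phi> q m t))
    * word_mat n \<chi> h2 t j"
  have colours: "{0, 1, 2::nat} = {..<3}"
    by auto
  have labels: "set (join (p, q) (h1, h2)) = Inl ` set (p @ q) \<union> Inr ` set (h1 @ h2)"
    by (auto simp: join_def)
  have blocks: "matprod n (map (\<lambda>l. rho n (case_sum \<phi> \<chi> l)) (join (p, q) (h1, h2))) i j = (\<Sum>t\<le>n. ?X \<phi> \<chi> t)"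
    for \<phi> \<chi>
  proof -
    let ?M = "\<lambda>\<phi> w. map (\<lambda>x. rho n (\<phi> x)) w"
    have "map (\<lambda>l. rho n (case_sum \<phi> \<chi> l)) (join (p, q) (h1, h2)) = (?M \<phi> p @ ?M \<chi> h1 @ ?M \<phi> q) @ ?M \<chi> h2"
      by (simp add: join_def)
    then have "matprod n (map (\<lambda>l. rho n (case_sum \<phi> \<chi> l)) (join (p, q) (h1, h2))) i j
        = (\<Sum>t\<le>n. matprod n (?M \<phi> p @ ?M \<chi> h1 @ ?M \<phi> q) i t * word_mat n \<chi> h2 t j)"
      by (simp only: matprod_append[OF ij(1)])
    also have "\<dots> = (\<Sum>t\<le>n. ?X \<phi> \<chi> t)"
      using ij by (intro sum.cong refl) (simp add: matprod_append sum_distrib_left)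
    finally show ?thesis .
  qed
  have "wrep n (join (p, q) (h1, h2)) i j = (\<Sum>\<phi>\<in>?D. \<Sum>\<chi>\<in>?E. \<Sum>t\<le>n. ?X \<phi> \<chi> t)"
    unfolding wrep_def colours labels sum_PiE_Plus blocks ..
  also have "\<dots> = (\<Sum>\<chi>\<in>?E. \<Sum>t\<le>n. \<Sum>\<phi>\<in>?D. ?X \<phi> \<chi> t)"
    by (subst sum.swap) (intro sum.cong refl sum.swap)
  also have "\<dots> = join_val n h1 h2 i j (share_val rho_left rho_right p (rev q))"
    unfolding join_val_def using ij
      by (intro sum.cong refl) (simp add: app_share_val sum_distrib_right)
  finally show ?thesis .
qed

lemma join_val_add: "join_val n h1 h2 i j (Z + Z') = join_val n h1 h2 i j Z + join_val n h1 h2 i j Z'"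
  by (simp add: join_val_def mfam_add_def distrib_right sum.distrib)

lemma join_val_sum: "join_val n h1 h2 i j (\<Sum>k\<in>K. Z k) = (\<Sum>k\<in>K. join_val n h1 h2 i j (Z k))"
  by (induction K rule: infinite_finite_induct) (simp_all add: join_val_add, simp_all add: join_val_def)

lemma join_val_scalar_op: "join_val n h1 h2 i j (scalar_op z * Z) = z * join_val n h1 h2 i j Z"
  by (simp add: join_val_def mfam_scale_def sum_distrib_left mult.assoc)

lemma join_val_casimir_op_power:
  assumes "i \<le> n"
  shows "join_val n h1 h2 i j (casimir_op ^ k * Z) = casimir_eigval n ^ k * join_val n h1 h2 i j Z"
proof -
  have "app (casimir_op * Z) Y n i t = casimir_eigval n * app Z Y n i t" if "t \<le> n" for Z Y t
    using assms that casimir_diag_mult[of i n t "app Z Y"]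
      by (simp add: casimir_op_def app_lmult lmult_fun_def)
  then have "join_val n h1 h2 i j (casimir_op * Z) = casimir_eigval n * join_val n h1 h2 i j Z" for Z
    by (simp add: join_val_def sum_distrib_left mult.assoc)
  then show ?thesis
    by (induction k) (simp_all add: mult.assoc)
qed

lemma join_val_cas_poly:
  assumes "i \<le> n"
  shows "join_val n h1 h2 i j (rep.cas_poly f * Z)
    = (\<Sum>k\<le>degree f. coeff f k * casimir_eigval n ^ k * join_val n h1 h2 i j Z)"
  unfolding rep.cas_poly_def sum_distrib_right join_val_sum
  by (intro sum.cong refl) (simp add: mult.assoc join_val_scalar_op join_val_casimir_op_power[OF assms])

text \<open>Right multiplications compose in reverse order, hence the \<open>rev\<close>.\<close>

definition share_op :: "share \<Rightarrow> mfam_op" where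
  "share_op s = share_val rho_left rho_right (fst s) (rev (snd s))"

lemma wrep_join_share_op:
  "i \<le> n \<Longrightarrow> j \<le> n \<Longrightarrow> wrep n (join s H) i j = join_val n (fst H) (snd H) i j (share_op s)"
  using wrep_join_eq_join_val[of i n j "fst s" "snd s" "fst H" "snd H"] by (simp add: share_op_def)

lemma share_op_add_arches: "share_op (add_arches k s) = casimir_op ^ k * share_op s"
proof -
  define N where "N = Suc (Max (insert 0 (set (fst s @ snd s))))"
  let ?arches = "\<lambda>k. concat (map (\<lambda>t. [N + t, N + t]) [0..<k])"
  have fresh: "x < N" if "x \<in> set (fst s @ snd s)" for x
    using that by (simp add: N_def le_imp_less_Suc)
  have "share_val rho_left rho_right (fst s @ ?arches k) (rev (snd s)) = casimir_op ^ k * share_op s"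
  proof (induction k)
    case (Suc k)
    have "N + k \<notin> set (fst s @ ?arches k @ rev (snd s))"
      using fresh by fastforce
    then show ?case
      using rep.share_val_arch[of "N + k" "fst s @ ?arches k" "[]" "rev (snd s)"] Suc
      by (simp add: mult.assoc)
  qed (simp add: share_op_def)
  then show ?thesis
    by (simp add: share_op_def add_arches_def Let_def N_def)
qed

lemma comb_w_Cons: "comb_w n ((a, s) # L) H i j = a * wrep n (join s H) i j + comb_w n L H i j"
  by (simp add: comb_w_def)

lemma comb_w_concat: "comb_w n (concat Ls) H i j = (\<Sum>L\<leftarrow>Ls. comb_w n L H i j)"
  by (induction Ls) (simp_all add: comb_w_def)

lemma comb_w_poly_act:
  "comb_w n (poly_act f s) H i j = (\<Sum>k\<le>degree f. coeff f k * wrep n (join (add_arches k s) H) i j)"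
  by (simp add: poly_act_def comb_w_def interv_sum_list_conv_sum_set_nat atLeast0LessThan
      lessThan_Suc_atMost comp_def del: upt_Suc)

lemma S_eq_if_share_op_eq:
  assumes "share_op I = share_op (T m) + (\<Sum>k<m. rep.cas_poly (b k) * share_op (T k))"
  shows "S_eq [(1, I)] ((1, T m) # concat (map (\<lambda>k. poly_act (b k) (T k)) [0..<m]))"
  unfolding S_eq_def
proof (intro allI impI)
  fix H :: share and n i j :: nat
  assume ij: "i \<le> n" "j \<le> n"
  let ?J = "join_val n (fst H) (snd H) i j"
  have "comb_w n [(1, I)] H i j = ?J (share_op I)"
    using ij by (simp add: comb_w_def wrep_join_share_op)
  also have "\<dots> = ?J (share_op (T m))
      + (\<Sum>k<m. \<Sum>d\<le>degree (b k). coeff (b k) d * casimir_eigval n ^ d * ?J (share_op (T k)))"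
    unfolding assms join_val_add join_val_sum by (simp add: join_val_cas_poly[OF ij(1)])
  also have "\<dots> = comb_w n ((1, T m) # concat (map (\<lambda>k. poly_act (b k) (T k)) [0..<m])) H i j"
    using ij
    by (simp add: comb_w_Cons comb_w_concat comb_w_poly_act interv_sum_list_conv_sum_set_nat
        atLeast0LessThan wrep_join_share_op share_op_add_arches join_val_casimir_op_power mult.assoc)
  finally show "comb_w n [(1, I)] H i j
      = comb_w n ((1, T m) # concat (map (\<lambda>k. poly_act (b k) (T k)) [0..<m])) H i j" .
qed

lemma share_without_arches:
  assumes "is_share s" "arches s = 0"
  shows "chord_word (fst s @ snd s)" "distinct (fst s)" "distinct (snd s)"
    "length (fst s @ snd s) = 2 * bridges s"
proof -
  obtain p q where s: "s = (p, q)"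
    by fastforce
  have two: "count_list (p @ q) t = 2" if "t \<in> set (p @ q)" for t
    using assms(1) that by (simp add: is_share_def s)
  have "{l \<in> set p \<union> set q. count_list p l = 2 \<or> count_list q l = 2} = {}"
    using assms(2) by (simp add: arches_def s)
  then have one: "count_list p t \<le> 1 \<and> count_list q t \<le> 1" for t
    using two[of t] by (cases "t \<in> set (p @ q)") (auto simp: count_list_0_iff)
  show "chord_word (fst s @ snd s)"
    using two by (simp add: chord_word_def s)
  show "distinct (fst s)" "distinct (snd s)"
    using one by (simp_all add: distinct_iff_count_list_le_1 s)
  have "{l \<in> set p \<union> set q. count_list p l = 1 \<and> count_list q l = 1} = set (p @ q)"
  proof (intro set_eqI iffI)
    fix l assume "l \<in> set (p @ q)"
    then show "l \<in> {l \<in> set p \<union> set q. count_list p l = 1 \<and> count_list q l = 1}"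
      using one[of l] two[of l] by auto
  qed auto
  then have "bridges s = card (set (p @ q))"
    by (simp add: bridges_def s)
  moreover have "length (p @ q) = (\<Sum>t\<in>set (p @ q). count_list (p @ q) t)"
    by (rule sum_count_set [symmetric]) simp_all
  ultimately show "length (fst s @ snd s) = 2 * bridges s"
    using two by (simp add: s)
qed

lemma count_list_upt: "count_list [0..<k] t = (if t < k then 1 else 0)"
  by (induction k) auto

lemma xpow_share: "is_share (xpow k)" "arches (xpow k) = 0" "bridges (xpow k) = k"
  by (simp_all add: xpow_def is_share_def arches_def bridges_def count_list_upt)

lemma ypow_share: "is_share (ypow k)" "arches (ypow k) = 0" "bridges (ypow k) = k"
  by (simp_all add: ypow_def is_share_def arches_def bridges_def count_list_upt)

lemma share_op_monic:
  assumes "is_share s" "arches s = 0"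
  shows "share_op s - omega rho_left rho_right ^ bridges s \<in> rep.omega_span (bridges s)"
proof -
  have "chord_word (fst s @ rev (snd s))"
    using share_without_arches(1)[OF assms] by (rule chord_word_count_cong) simp
  then show ?thesis
    using rep.share_val_monic[of "fst s" "rev (snd s)"] share_without_arches[OF assms]
    by (simp add: share_op_def)
qed

lemma share_op_expansion:
  assumes "is_share I" "arches I = 0"
    and T: "\<And>k. is_share (T k)" "\<And>k. arches (T k) = 0" "\<And>k. bridges (T k) = k"
  shows "\<exists>b. share_op I = share_op (T (bridges I)) + (\<Sum>k<bridges I. rep.cas_poly (b k) * share_op (T k))"
proof (rule rep.share_val_monic_expansion[of "fst I" "rev (snd I)", folded share_op_def])
  show "chord_word (fst I @ rev (snd I))"
    using share_without_arches(1)[OF assms(1,2)] by (rule chord_word_count_cong) simp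
  show "share_op (T k) - omega rho_left rho_right ^ k \<in> rep.omega_span k" for k
    using share_op_monic[OF T(1,2), of k] T(3) by simp
qed (use share_without_arches[OF assms(1,2)] in simp_all)

theorem lemma3:
  fixes I :: share and m :: nat
  assumes "is_share I" and "bridges I = m" and "arches I = 0"
  shows "(\<exists>a :: nat \<Rightarrow> complex poly.
            S_eq [(1, I)] ((1, xpow m) # concat (map (\<lambda>k. poly_act (a k) (xpow k)) [0..<m])))
       \<and> (\<exists>b :: nat \<Rightarrow> complex poly.
            S_eq [(1, I)] ((1, ypow m) # concat (map (\<lambda>k. poly_act (b k) (ypow k)) [0..<m])))"
proof -
  obtain a where "share_op I = share_op (xpow m) + (\<Sum>k<m. rep.cas_poly (a k) * share_op (xpow k))"
    using share_op_expansion[OF assms(1,3) xpow_share] assms(2) by blast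
  moreover obtain b where "share_op I = share_op (ypow m) + (\<Sum>k<m. rep.cas_poly (b k) * share_op (ypow k))"
    using share_op_expansion[OF assms(1,3) ypow_share] assms(2) by blast
  ultimately show ?thesis
    using S_eq_if_share_op_eq by blast
qed

end
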